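(* Let $G$ be a finite group with $|G|\ge 4$, $\sigma$ an automorphism of $G$ of order two, and $S$ a symmetric subset of $G$ closed under conjugation. Let $\rho_1,\dots,\rho_r$ be the irreducible complex representations of $G$ with characters $\chi_1,\dots,\chi_r$, and let $\lambda_i=\frac{1}{\dim\rho_i}\sum_{s\in S}\chi_i(s)$. (1) Up to factors of $\pm1$, the eigenvalues of the adjacency operator of the Cayley sum graph $C_\Sigma(G,S)$ are the numbers $\lambda_i$, each occurring with multiplicity $(\dim\rho_i)^2$, $1\le i\le r$. (2) If $\sigma(S)=S$, then up to factors of $\pm1$, the eigenvalues of the adjacency operator of the twisted Cayley graph $C(G,S)^\sigma$ are the numbers $\lambda_i$, each occurring with multiplicity $(\dim\rho_i)^2$. (3) If $\sigma(S)=S$, then up to factors of $\pm1$, the eigenvalues of the adjacency operator of the twisted Cayley sum graph $C_\Sigma(G,S)^\sigma$ are the numbers $\lambda_i$, each occurring with multiplicity $(\dim\rho_i)^2$. Moreover, the number of factors equal to $1$ in (1) (resp. (2), (3)) equals the average of $|G|$ and the number of solutions $g\in G$ of $g=g^{-1}$ (resp. $g=\sigma(g)$, $g=\sigma(g)^{-1}$).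
   Context: For a finite group $G$, an automorphism $\sigma$ and a subset $S$: $C(G,S)$ has vertex set $G$ and an edge from $x$ to $xs$ for each $s\in S$; $C_\Sigma(G,S)$ has an edge from $x$ to $x^{-1}s$; $C(G,S)^\sigma$ has an edge from $x$ to $\sigma(xs)$; $C_\Sigma(G,S)^\sigma$ has an edge from $x$ to $\sigma(x^{-1}s)$. "Up to factors of $\pm1$" means there is a bijection between the two multisets of eigenvalues under which each eigenvalue is sent to itself or its negative; the "factors of $1$" are those matched with themselves. *)

theory Defs
  imports "HOL-Algebra.Group" "Jordan_Normal_Form.Char_Poly"
begin

definition is_rep :: "('a, 'b) monoid_scheme \<Rightarrow> nat \<Rightarrow> ('a \<Rightarrow> complex mat) \<Rightarrow> bool" where
  "is_rep G n \<rho> \<longleftrightarrow>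
     (\<forall>g\<in>carrier G. \<rho> g \<in> carrier_mat n n) \<and>
     (\<forall>g\<in>carrier G. \<forall>h\<in>carrier G. \<rho> (g \<otimes>\<^bsub>G\<^esub> h) = \<rho> g * \<rho> h) \<and>
     \<rho> \<one>\<^bsub>G\<^esub> = 1\<^sub>m n"

definition invariant_subspace ::
  "('a, 'b) monoid_scheme \<Rightarrow> nat \<Rightarrow> ('a \<Rightarrow> complex mat) \<Rightarrow> complex vec set \<Rightarrow> bool" where
  "invariant_subspace G n \<rho> W \<longleftrightarrow>
     W \<subseteq> carrier_vec n \<and> 0\<^sub>v n \<in> W \<and>
     (\<forall>v\<in>W. \<forall>w\<in>W. v + w \<in> W) \<and>
     (\<forall>c. \<forall>v\<in>W. c \<cdot>\<^sub>v v \<in> W) \<and>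
     (\<forall>g\<in>carrier G. \<forall>v\<in>W. \<rho> g *\<^sub>v v \<in> W)"

definition irreducible_rep :: "('a, 'b) monoid_scheme \<Rightarrow> nat \<Rightarrow> ('a \<Rightarrow> complex mat) \<Rightarrow> bool" where
  "irreducible_rep G n \<rho> \<longleftrightarrow> is_rep G n \<rho> \<and> 0 < n \<and>
     (\<forall>W. invariant_subspace G n \<rho> W \<longrightarrow> W = {0\<^sub>v n} \<or> W = carrier_vec n)"

definition equiv_rep ::
  "('a, 'b) monoid_scheme \<Rightarrow> nat \<Rightarrow> ('a \<Rightarrow> complex mat) \<Rightarrow> nat \<Rightarrow> ('a \<Rightarrow> complex mat) \<Rightarrow> bool" where
  "equiv_rep G n \<rho> m \<tau> \<longleftrightarrow> n = m \<and>
     (\<exists>P\<in>carrier_mat n n. invertible_mat P \<and> (\<forall>g\<in>carrier G. P * \<rho> g = \<tau> g * P))"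

definition complete_irreps ::
  "('a, 'b) monoid_scheme \<Rightarrow> (nat \<times> ('a \<Rightarrow> complex mat)) list \<Rightarrow> bool" where
  "complete_irreps G reps \<longleftrightarrow>
     (\<forall>i<length reps. irreducible_rep G (fst (reps ! i)) (snd (reps ! i))) \<and>
     (\<forall>i<length reps. \<forall>j<length reps. i \<noteq> j \<longrightarrow>
        \<not> equiv_rep G (fst (reps ! i)) (snd (reps ! i)) (fst (reps ! j)) (snd (reps ! j))) \<and>
     (\<forall>n \<rho>. irreducible_rep G n \<rho> \<longrightarrow>
        (\<exists>i<length reps. equiv_rep G n \<rho> (fst (reps ! i)) (snd (reps ! i))))"

definition mat_trace :: "complex mat \<Rightarrow> complex" where
  "mat_trace A = (\<Sum>i<dim_row A. A $$ (i, i))"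

definition character :: "('a \<Rightarrow> complex mat) \<Rightarrow> 'a \<Rightarrow> complex" where
  "character \<rho> g = mat_trace (\<rho> g)"

definition rep_lambda :: "'a set \<Rightarrow> nat \<Rightarrow> ('a \<Rightarrow> complex mat) \<Rightarrow> complex" where
  "rep_lambda S n \<rho> = (\<Sum>s\<in>S. character \<rho> s) / of_nat n"

text \<open>A fixed enumeration of the vertex set (the spectrum does not depend on it).\<close>
definition enum_carrier :: "('a, 'b) monoid_scheme \<Rightarrow> 'a list" where
  "enum_carrier G = (SOME xs. distinct xs \<and> set xs = carrier G)"

text \<open>Adjacency matrix of the digraph on vertex set carrier G with one edge from x to
  e x s for every s in S: entry (x,y) is the number of edges from x to y.\<close>
definition adj_matrix :: "('a, 'b) monoid_scheme \<Rightarrow> 'a set \<Rightarrow> ('a \<Rightarrow> 'a \<Rightarrow> 'a) \<Rightarrow> complex mat" where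
  "adj_matrix G S e = (let vs = enum_carrier G in
     mat (length vs) (length vs) (\<lambda>(i, j). of_nat (card {s\<in>S. e (vs ! i) s = vs ! j})))"

definition cayley_edge :: "('a, 'b) monoid_scheme \<Rightarrow> 'a \<Rightarrow> 'a \<Rightarrow> 'a" where
  "cayley_edge G x s = x \<otimes>\<^bsub>G\<^esub> s"
definition cayley_sum_edge :: "('a, 'b) monoid_scheme \<Rightarrow> 'a \<Rightarrow> 'a \<Rightarrow> 'a" where
  "cayley_sum_edge G x s = inv\<^bsub>G\<^esub> x \<otimes>\<^bsub>G\<^esub> s"
definition twisted_cayley_edge :: "('a, 'b) monoid_scheme \<Rightarrow> ('a \<Rightarrow> 'a) \<Rightarrow> 'a \<Rightarrow> 'a \<Rightarrow> 'a" where
  "twisted_cayley_edge G \<sigma> x s = \<sigma> (x \<otimes>\<^bsub>G\<^esub> s)"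
definition twisted_cayley_sum_edge :: "('a, 'b) monoid_scheme \<Rightarrow> ('a \<Rightarrow> 'a) \<Rightarrow> 'a \<Rightarrow> 'a \<Rightarrow> 'a" where
  "twisted_cayley_sum_edge G \<sigma> x s = \<sigma> (inv\<^bsub>G\<^esub> x \<otimes>\<^bsub>G\<^esub> s)"

definition eigenvalue_mset :: "complex mat \<Rightarrow> complex multiset" where
  "eigenvalue_mset A = (THE M. char_poly A = (\<Prod>a\<in>#M. [:- a, 1:]))"

text \<open>E equals, up to factors \<plusminus>1, the multiset of the \<lambda>_i each with multiplicity
  (dim \<rho>_i)^2 (indexed by triples (i,a,b), a,b < dim \<rho>_i), and the number of factors
  equal to 1 is c (i.e. 2*c = |G| + N).\<close>
definition rep_index :: "(nat \<times> ('a \<Rightarrow> complex mat)) list \<Rightarrow> (nat \<times> nat \<times> nat) set" where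
  "rep_index reps = {(i, a, b). i < length reps \<and> a < fst (reps ! i) \<and> b < fst (reps ! i)}"

definition spectrum_up_to_signs ::
  "'a set \<Rightarrow> (nat \<times> ('a \<Rightarrow> complex mat)) list \<Rightarrow> complex multiset \<Rightarrow> nat \<Rightarrow> bool" where
  "spectrum_up_to_signs S reps E c \<longleftrightarrow>
     (\<exists>\<epsilon> :: nat \<times> nat \<times> nat \<Rightarrow> complex.
        (\<forall>k\<in>rep_index reps. \<epsilon> k = 1 \<or> \<epsilon> k = -1) \<and>
        E = image_mset (\<lambda>(i, a, b). \<epsilon> (i, a, b) * rep_lambda S (fst (reps ! i)) (snd (reps ! i)))
              (mset_set (rep_index reps)) \<and>
        card {k\<in>rep_index reps. \<epsilon> k = 1} = c)"

end

theory Submission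
  imports Defs "Jordan_Normal_Form.Schur_Decomposition"
begin

lemma mult_mat_vec_zero_vec [simp]:
  fixes A :: "'a :: semiring_0 mat"
  shows "A \<in> carrier_mat nr nc \<Longrightarrow> A *\<^sub>v 0\<^sub>v nc = 0\<^sub>v nr"
  by (rule eq_vecI) auto

lemma smult_zero_vec [simp]: "a \<cdot>\<^sub>v 0\<^sub>v n = (0\<^sub>v n :: 'a :: mult_zero vec)"
  by (rule eq_vecI) auto

lemma index_mult_mat_sum:
  fixes A B :: "'a :: comm_semiring_0 mat"
  assumes "A \<in> carrier_mat nr m" "B \<in> carrier_mat m nc" "i < nr" "j < nc"
  shows "(A * B) $$ (i, j) = (\<Sum>k<m. A $$ (i, k) * B $$ (k, j))"
  using assms by (auto simp: scalar_prod_def lessThan_atLeast0 intro!: sum.cong)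

lemma index_mult_mat_vec_sum:
  fixes A :: "'a :: comm_semiring_0 mat"
  assumes "A \<in> carrier_mat nr m" "v \<in> carrier_vec m" "i < nr"
  shows "(A *\<^sub>v v) $ i = (\<Sum>k<m. A $$ (i, k) * v $ k)"
  using assms by (auto simp: scalar_prod_def lessThan_atLeast0 intro!: sum.cong)

lemma index_mult_mat_vec_unit_vec:
  fixes A :: "'a :: semiring_1 mat"
  assumes "A \<in> carrier_mat nr nc" "i < nr" "j < nc"
  shows "(A *\<^sub>v unit_vec nc j) $ i = A $$ (i, j)"
  using assms by simp

lemma col_eq_mult_mat_vec_unit_vec:
  fixes A :: "'a :: semiring_1 mat"
  assumes "A \<in> carrier_mat nr nc" "j < nc"
  shows "col A j = A *\<^sub>v unit_vec nc j"
  using assms by (intro eq_vecI) auto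

lemma mat_trace_eq_sum_list_diag: "mat_trace A = sum_list (diag_mat A)"
  unfolding mat_trace_def diag_mat_def by (simp add: sum_list_sum_nth lessThan_atLeast0)

lemma mat_trace_mult_comm:
  assumes A: "A \<in> carrier_mat a b" and B: "B \<in> carrier_mat b a"
  shows "mat_trace (A * B) = mat_trace (B * A)"
proof -
  have "mat_trace (A * B) = (\<Sum>i<a. (A * B) $$ (i, i))" unfolding mat_trace_def using A by simp
  also have "\<dots> = (\<Sum>i<a. \<Sum>k<b. A $$ (i, k) * B $$ (k, i))"
    by (rule sum.cong[OF refl], rule index_mult_mat_sum[OF A B]) auto
  also have "\<dots> = (\<Sum>k<b. \<Sum>i<a. B $$ (k, i) * A $$ (i, k))"
    by (subst sum.swap) (simp add: mult.commute)
  also have "\<dots> = (\<Sum>k<b. (B * A) $$ (k, k))"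
    by (rule sum.cong[OF refl], rule index_mult_mat_sum[OF B A, symmetric]) auto
  also have "\<dots> = mat_trace (B * A)" unfolding mat_trace_def using B by simp
  finally show ?thesis .
qed

lemma mat_trace_conj:
  assumes M: "M \<in> carrier_mat n n" and M': "M' \<in> carrier_mat n n" and T: "T \<in> carrier_mat n n"
    and MM': "M * M' = 1\<^sub>m n"
  shows "mat_trace (M' * T * M) = mat_trace T"
proof -
  have "mat_trace (M' * T * M) = mat_trace (M' * (T * M))" using assoc_mult_mat[OF M' T M] by simp
  also have "\<dots> = mat_trace ((T * M) * M')" by (rule mat_trace_mult_comm[OF M' mult_carrier_mat[OF T M]])
  also have "\<dots> = mat_trace T" using assoc_mult_mat[OF T M M'] MM' T by simp
  finally show ?thesis .
qed

definition inj_mat :: "'a :: field mat \<Rightarrow> nat \<Rightarrow> bool" where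
  "inj_mat A n \<longleftrightarrow> (\<forall>v\<in>carrier_vec n. A *\<^sub>v v = 0\<^sub>v (dim_row A) \<longrightarrow> v = 0\<^sub>v n)"

lemma inj_mat_one: "inj_mat (1\<^sub>m n) n"
  unfolding inj_mat_def by auto

lemma inj_mat_dim_le:
  fixes A :: "'a :: field mat"
  assumes A: "A \<in> carrier_mat e d" and inj: "inj_mat A d"
  shows "d \<le> e"
proof (rule ccontr)
  assume "\<not> d \<le> e"
  then have de: "e < d" by simp
  \<comment> \<open>pad A with zero rows to a square matrix; it stays injective but has a zero row\<close>
  define Z where "Z = mat d d (\<lambda>(i, j). if i < e then A $$ (i, j) else 0)"
  have Zc: "Z \<in> carrier_mat d d" unfolding Z_def by simp
  have "A *\<^sub>v v = 0\<^sub>v e" if v: "v \<in> carrier_vec d" "Z *\<^sub>v v = 0\<^sub>v d" for v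
  proof (rule eq_vecI)
    fix i assume "i < dim_vec (0\<^sub>v e :: 'a vec)"
    then have i: "i < e" by simp
    have "(A *\<^sub>v v) $ i = (\<Sum>k<d. Z $$ (i, k) * v $ k)"
      using index_mult_mat_vec_sum[OF A v(1) i] i de by (auto simp: Z_def intro!: sum.cong)
    also have "\<dots> = (Z *\<^sub>v v) $ i" using index_mult_mat_vec_sum[OF Zc v(1)] i de by simp
    finally show "(A *\<^sub>v v) $ i = 0\<^sub>v e $ i" using v(2) i de by simp
  qed (use A in auto)
  then have "det Z \<noteq> 0"
    using det_0_iff_vec_prod_zero[OF Zc] inj A unfolding inj_mat_def by auto
  moreover have "det (transpose_mat Z) = 0"
  proof -
    have "transpose_mat Z *\<^sub>v unit_vec d (d - 1) = 0\<^sub>v d"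
      by (rule eq_vecI) (use Zc de in \<open>auto simp: Z_def index_mult_mat_vec_unit_vec\<close>)
    then show ?thesis
      by (subst det_0_iff_vec_prod_zero[of _ d]) (use Zc de in \<open>auto intro!: exI[of _ "unit_vec d (d - 1)"]\<close>)
  qed
  ultimately show False using det_transpose[OF Zc] by simp
qed

lemma inj_mat_square_inverse:
  fixes A :: "'a :: field mat"
  assumes A: "A \<in> carrier_mat n n" and inj: "inj_mat A n"
  shows "\<exists>B\<in>carrier_mat n n. A * B = 1\<^sub>m n \<and> B * A = 1\<^sub>m n"
proof -
  have "det A \<noteq> 0"
    using det_0_iff_vec_prod_zero[OF A] inj A unfolding inj_mat_def by auto
  from det_non_zero_imp_unit[OF A this, of undefined]
  show ?thesis unfolding Units_def ring_mat_def by auto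
qed

lemma inj_mat_cancel_left:
  fixes B :: "'a :: field mat"
  assumes B: "B \<in> carrier_mat k m" and inj: "inj_mat B m"
    and X: "X \<in> carrier_mat m c" and Y: "Y \<in> carrier_mat m c" and eq: "B * X = B * Y"
  shows "X = Y"
proof (rule mat_col_eqI)
  fix j assume "j < dim_col Y"
  then have j: "j < c" using Y by simp
  have "B *\<^sub>v (col X j - col Y j) = B *\<^sub>v col X j - B *\<^sub>v col Y j"
    by (rule mult_minus_distrib_mat_vec[OF B]) (use X Y in auto)
  also have "\<dots> = 0\<^sub>v k"
  proof -
    have "B *\<^sub>v col X j = B *\<^sub>v col Y j" using eq col_mult2[OF B X j] col_mult2[OF B Y j] by metis
    then show ?thesis by (simp add: minus_cancel_vec[OF mult_mat_vec_carrier[OF B col_carrier_vec[OF j Y]]])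
  qed
  finally have diff: "col X j - col Y j = 0\<^sub>v m"
    using inj B X Y j unfolding inj_mat_def by auto
  show "col X j = col Y j"
  proof (rule eq_vecI)
    fix i assume "i < dim_vec (col Y j)"
    then show "col X j $ i = col Y j $ i"
      using arg_cong[OF diff, of "\<lambda>v. v $ i"] X Y by auto
  qed (use X Y in auto)
qed (use X Y in auto)

lemma inj_mat_mult:
  fixes A B :: "'a :: field mat"
  assumes A: "A \<in> carrier_mat k m" "inj_mat A m" and B: "B \<in> carrier_mat m l" "inj_mat B l"
  shows "inj_mat (A * B) l"
  unfolding inj_mat_def
proof (intro ballI impI)
  fix v :: "'a vec" assume v: "v \<in> carrier_vec l" and z: "A * B *\<^sub>v v = 0\<^sub>v (dim_row (A * B))"
  then have "A *\<^sub>v (B *\<^sub>v v) = 0\<^sub>v k" using A B by simp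
  then have "B *\<^sub>v v = 0\<^sub>v m" using A B v unfolding inj_mat_def by auto
  then show "v = 0\<^sub>v l" using B v unfolding inj_mat_def by auto
qed

lemma inj_mat_of_right_inverse:
  fixes A :: "'a :: field mat"
  assumes A: "A \<in> carrier_mat n m" and B: "B \<in> carrier_mat m n" and BA: "B * A = 1\<^sub>m m"
  shows "inj_mat A m"
  unfolding inj_mat_def
proof (intro ballI impI)
  fix v :: "'a vec" assume v: "v \<in> carrier_vec m" and z: "A *\<^sub>v v = 0\<^sub>v (dim_row A)"
  have "v = (B * A) *\<^sub>v v" using BA v by simp
  also have "\<dots> = B *\<^sub>v (A *\<^sub>v v)" by (rule assoc_mult_mat_vec[OF B A v])
  finally show "v = 0\<^sub>v m" using z A B by (auto simp: scalar_prod_def)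
qed

lemma surj_mat_right_inverse:
  fixes X :: "'a :: field mat"
  assumes X: "X \<in> carrier_mat e d" and surj: "\<forall>w\<in>carrier_vec e. \<exists>v\<in>carrier_vec d. w = X *\<^sub>v v"
  shows "\<exists>Y\<in>carrier_mat d e. X * Y = 1\<^sub>m e"
proof -
  have "\<forall>j. \<exists>v. v \<in> carrier_vec d \<and> unit_vec e j = X *\<^sub>v v"
    using surj unit_vec_carrier by blast
  then obtain pre where pre: "\<And>j. pre j \<in> carrier_vec d \<and> unit_vec e j = X *\<^sub>v pre j"
    by metis
  define Y where "Y = mat d e (\<lambda>(i, j). pre j $ i)"
  have Y: "Y \<in> carrier_mat d e" unfolding Y_def by simp
  have "X * Y = 1\<^sub>m e"
  proof (rule mat_col_eqI)
    fix j assume "j < dim_col (1\<^sub>m e :: 'a mat)"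
    then have j: "j < e" by simp
    have "col Y j = pre j" by (rule eq_vecI) (use pre[of j] j in \<open>auto simp: Y_def\<close>)
    have "col (X * Y) j = X *\<^sub>v col Y j" by (rule col_mult2[OF X Y j])
    also have "\<dots> = unit_vec e j" using pre[of j] \<open>col Y j = pre j\<close> by simp
    finally show "col (X * Y) j = col (1\<^sub>m e) j" using j by simp
  qed (use X Y in auto)
  then show ?thesis using Y by blast
qed

lemma mult_mat_vec_extend_col:
  fixes B :: "'a :: field mat"
  assumes B: "B \<in> carrier_mat k m" and u: "u \<in> carrier_vec k" and c: "c \<in> carrier_vec (Suc m)"
  shows "mat k (Suc m) (\<lambda>(i, j). if j < m then B $$ (i, j) else u $ i) *\<^sub>v c =
    B *\<^sub>v vec m (\<lambda>i. c $ i) + (c $ m) \<cdot>\<^sub>v u"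
    (is "?B' *\<^sub>v c = _")
proof (rule eq_vecI)
  fix i assume "i < dim_vec (B *\<^sub>v vec m (\<lambda>i. c $ i) + (c $ m) \<cdot>\<^sub>v u)"
  then have i: "i < k" using B u by simp
  have "(?B' *\<^sub>v c) $ i = (\<Sum>j<m. B $$ (i, j) * c $ j) + u $ i * c $ m"
    using index_mult_mat_vec_sum[of ?B' k "Suc m" c i] c i by simp
  also have "(\<Sum>j<m. B $$ (i, j) * c $ j) = (B *\<^sub>v vec m (\<lambda>i. c $ i)) $ i"
    using index_mult_mat_vec_sum[OF B _ i, of "vec m (\<lambda>i. c $ i)"] by simp
  finally show "(?B' *\<^sub>v c) $ i = (B *\<^sub>v vec m (\<lambda>i. c $ i) + (c $ m) \<cdot>\<^sub>v u) $ i"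
    using i B u by (simp add: mult.commute)
qed (use B u in auto)

lemma inj_mat_extend_col:
  fixes B :: "'a :: field mat"
  assumes B: "B \<in> carrier_mat k m" "inj_mat B m" and u: "u \<in> carrier_vec k"
    and new: "\<forall>c\<in>carrier_vec m. u \<noteq> B *\<^sub>v c"
  shows "inj_mat (mat k (Suc m) (\<lambda>(i, j). if j < m then B $$ (i, j) else u $ i)) (Suc m)"
  unfolding inj_mat_def
proof (intro ballI impI)
  fix c assume c: "c \<in> carrier_vec (Suc m)"
    and z: "mat k (Suc m) (\<lambda>(i, j). if j < m then B $$ (i, j) else u $ i) *\<^sub>v c =
      0\<^sub>v (dim_row (mat k (Suc m) (\<lambda>(i, j). if j < m then B $$ (i, j) else u $ i)))"
  define c0 where "c0 = vec m (\<lambda>i. c $ i)"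
  have z': "B *\<^sub>v c0 + (c $ m) \<cdot>\<^sub>v u = 0\<^sub>v k"
    using z mult_mat_vec_extend_col[OF B(1) u c] unfolding c0_def by simp
  have last: "c $ m = 0"
  proof (rule ccontr)
    assume cm: "c $ m \<noteq> 0"
    have "u = B *\<^sub>v ((- 1 / c $ m) \<cdot>\<^sub>v c0)"
    proof (rule eq_vecI)
      fix i assume "i < dim_vec (B *\<^sub>v ((- 1 / c $ m) \<cdot>\<^sub>v c0))"
      then have i: "i < k" using B by simp
      have "(B *\<^sub>v c0) $ i + c $ m * u $ i = 0"
        using arg_cong[OF z', of "\<lambda>v. v $ i"] i B u unfolding c0_def by simp
      then show "u $ i = (B *\<^sub>v ((- 1 / c $ m) \<cdot>\<^sub>v c0)) $ i"
        using i B cm mult_mat_vec[OF B(1), of c0 "- 1 / c $ m"]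
        by (simp add: c0_def field_simps add_eq_0_iff)
    qed (use B u in auto)
    then show False using new unfolding c0_def by auto
  qed
  have "0 \<cdot>\<^sub>v u = 0\<^sub>v k" by (rule eq_vecI) (use u in auto)
  then have "B *\<^sub>v c0 = 0\<^sub>v k" using z' last B u by (simp add: c0_def)
  then have c0: "c0 = 0\<^sub>v m" using B unfolding inj_mat_def c0_def by auto
  show "c = 0\<^sub>v (Suc m)"
  proof (rule eq_vecI)
    fix i assume "i < dim_vec (0\<^sub>v (Suc m) :: 'a vec)"
    then have "i < m \<or> i = m" by auto
    then show "c $ i = 0\<^sub>v (Suc m) $ i"
      using arg_cong[OF c0, of "\<lambda>v. v $ i"] last unfolding c0_def by auto
  qed (use c in simp)
qed

lemma subspace_eq_inj_mat_image:
  fixes U :: "'a :: field vec set"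
  assumes Uc: "U \<subseteq> carrier_vec k" and U0: "0\<^sub>v k \<in> U"
    and Uadd: "\<forall>v\<in>U. \<forall>w\<in>U. v + w \<in> U" and Usmult: "\<forall>a. \<forall>v\<in>U. a \<cdot>\<^sub>v v \<in> U"
  shows "\<exists>m B. B \<in> carrier_mat k m \<and> inj_mat B m \<and> (\<forall>c\<in>carrier_vec m. B *\<^sub>v c \<in> U) \<and>
               (\<forall>u\<in>U. \<exists>c\<in>carrier_vec m. u = B *\<^sub>v c)"
proof -
  \<comment> \<open>take an injective matrix with image inside U and as many columns as possible\<close>
  define P where "P m \<longleftrightarrow> (\<exists>B. B \<in> carrier_mat k m \<and> inj_mat B m \<and> (\<forall>c\<in>carrier_vec m. B *\<^sub>v c \<in> U))" for m
  have "P 0" unfolding P_def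
  proof (intro exI[of _ "0\<^sub>m k 0"] conjI ballI)
    fix c :: "'a vec" assume "c \<in> carrier_vec 0"
    then have "0\<^sub>m k 0 *\<^sub>v c = 0\<^sub>v k" by (intro eq_vecI) (auto simp: scalar_prod_def)
    then show "0\<^sub>m k 0 *\<^sub>v c \<in> U" using U0 by simp
  qed (auto simp: inj_mat_def)
  moreover have bound: "P m \<Longrightarrow> m \<le> k" for m unfolding P_def using inj_mat_dim_le by auto
  ultimately have "P (GREATEST m. P m)" by (intro GreatestI_nat[of P 0 k]) auto
  then obtain m B where B: "B \<in> carrier_mat k m" "inj_mat B m" "\<forall>c\<in>carrier_vec m. B *\<^sub>v c \<in> U"
    and max: "\<And>m'. P m' \<Longrightarrow> m' \<le> m"
    using Greatest_le_nat[of P _ k] bound unfolding P_def by blast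
  have "\<forall>u\<in>U. \<exists>c\<in>carrier_vec m. u = B *\<^sub>v c"
  proof (rule ccontr)
    assume "\<not> ?thesis"
    then obtain u where u: "u \<in> U" and new: "\<forall>c\<in>carrier_vec m. u \<noteq> B *\<^sub>v c" by auto
    have uc: "u \<in> carrier_vec k" using u Uc by auto
    have "P (Suc m)" unfolding P_def
    proof (intro exI conjI ballI)
      show "mat k (Suc m) (\<lambda>(i, j). if j < m then B $$ (i, j) else u $ i) \<in> carrier_mat k (Suc m)" by simp
      show "inj_mat (mat k (Suc m) (\<lambda>(i, j). if j < m then B $$ (i, j) else u $ i)) (Suc m)"
        by (rule inj_mat_extend_col[OF B(1,2) uc new])
      fix c :: "'a vec" assume c: "c \<in> carrier_vec (Suc m)"
      have "B *\<^sub>v vec m (\<lambda>i. c $ i) + (c $ m) \<cdot>\<^sub>v u \<in> U" using B(3) Usmult Uadd u by simp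
      then show "mat k (Suc m) (\<lambda>(i, j). if j < m then B $$ (i, j) else u $ i) *\<^sub>v c \<in> U"
        using mult_mat_vec_extend_col[OF B(1) uc c] by simp
    qed
    then show False using max by fastforce
  qed
  then show ?thesis using B by blast
qed

lemma invertible_mat_inverse:
  fixes A :: "'a :: field mat"
  assumes A: "A \<in> carrier_mat n n" and inv: "invertible_mat A"
  obtains B where "B \<in> carrier_mat n n" "A * B = 1\<^sub>m n" "B * A = 1\<^sub>m n"
proof -
  obtain B where AB: "A * B = 1\<^sub>m n" and BA: "B * A = 1\<^sub>m (dim_row B)"
    using A inv unfolding invertible_mat_def inverts_mat_def by auto
  have "dim_col B = n" using arg_cong[OF AB, of dim_col] by simp
  moreover have "dim_row B = n" using arg_cong[OF BA, of dim_col] A by simp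
  ultimately show thesis using that AB BA by auto
qed

lemma mult_intertwining_mat:
  assumes P: "P \<in> carrier_mat k k" and P': "P' \<in> carrier_mat m m" and R: "R \<in> carrier_mat l l"
    and B: "B \<in> carrier_mat k m" and C: "C \<in> carrier_mat m l"
    and PB: "P * B = B * P'" and P'C: "P' * C = C * R"
  shows "P * (B * C) = (B * C) * R"
proof -
  have "P * (B * C) = B * P' * C" using PB assoc_mult_mat[OF P B C] by simp
  also have "\<dots> = B * (C * R)" using P'C assoc_mult_mat[OF B P' C] by simp
  also have "\<dots> = (B * C) * R" using assoc_mult_mat[OF B C R] by simp
  finally show ?thesis .
qed

lemma order_prod_mset_linear_factors:
  "Polynomial.order x (\<Prod>a\<in>#M. [:- a, 1:]) = count M (x :: 'a :: idom)"
proof (induction M)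
  case (add a M)
  have "(\<Prod>a\<in>#M. [:- a, 1:]) \<noteq> 0" by (auto simp: prod_mset_zero_iff)
  then have "[:- a, 1:] * (\<Prod>a\<in>#M. [:- a, 1:]) \<noteq> 0" by (metis no_zero_divisors pCons_eq_0_iff one_neq_zero)
  then have "Polynomial.order x (\<Prod>a\<in>#add_mset a M. [:- a, 1:]) =
      Polynomial.order x [:- a, 1:] + Polynomial.order x (\<Prod>a\<in>#M. [:- a, 1:])"
    unfolding prod_mset.add_mset image_mset_add_mset by (rule order_mult)
  also have "Polynomial.order x [:- a, 1:] = (if x = a then 1 else 0)"
    using order_power_n_n[of a 1] by (auto intro: order_0I)
  finally show ?case using add by simp
qed (simp add: order_0I)

lemma eigenvalue_mset_eqI:
  assumes "char_poly A = (\<Prod>a\<in>#E. [:- a, 1:])"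
  shows "eigenvalue_mset A = E"
  unfolding eigenvalue_mset_def
proof (rule the_equality)
  fix M assume "char_poly A = (\<Prod>a\<in>#M. [:- a, 1:])"
  then show "M = E"
    using assms arg_cong[of _ _ "Polynomial.order _"]
    by (intro multiset_eqI) (metis order_prod_mset_linear_factors)
qed (rule assms)

lemma count_sign_list:
  assumes "set es \<subseteq> {1, - 1 :: 'a :: ring_char_0}"
  shows "2 * of_nat (count (mset es) 1) = of_nat (length es) + sum_list es"
  using assms by (induction es) auto

lemma root_char_poly_eigenvector:
  fixes A :: "'a :: field mat"
  assumes A: "A \<in> carrier_mat n n" and root: "poly (char_poly A) c = 0"
  obtains v where "v \<in> carrier_vec n" "v \<noteq> 0\<^sub>v n" "A *\<^sub>v v = c \<cdot>\<^sub>v v"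
  using root eigenvalue_root_char_poly[OF A] A that unfolding eigenvalue_def eigenvector_def by auto

lemma involution_eigenvalue:
  fixes T :: "'a :: field mat"
  assumes T: "T \<in> carrier_mat n n" and TT: "T * T = 1\<^sub>m n"
    and v: "v \<in> carrier_vec n" "v \<noteq> 0\<^sub>v n" "T *\<^sub>v v = a \<cdot>\<^sub>v v"
  shows "a = 1 \<or> a = -1"
proof -
  have "v = T *\<^sub>v (T *\<^sub>v v)" using TT v assoc_mult_mat_vec[OF T T v(1)] by simp
  also have "\<dots> = (a * a) \<cdot>\<^sub>v v" using v mult_mat_vec[OF T v(1)] by (simp add: smult_smult_assoc)
  finally have eq: "v = (a * a) \<cdot>\<^sub>v v" .
  obtain i where i: "i < n" "v $ i \<noteq> 0" using v(1,2) by (metis carrier_vecD eq_vecI index_zero_vec)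
  have "a * a = 1" using arg_cong[OF eq, of "\<lambda>w. w $ i"] i v(1) by auto
  then show ?thesis using square_eq_1_iff[of a] by auto
qed

lemma char_poly_smult_involution:
  fixes T :: "complex mat"
  assumes T: "T \<in> carrier_mat n n" and TT: "T * T = 1\<^sub>m n"
  shows "\<exists>es. length es = n \<and> set es \<subseteq> {1, -1} \<and>
    char_poly (\<mu> \<cdot>\<^sub>m T) = (\<Prod>a\<in>#mset (map (\<lambda>e. e * \<mu>) es). [:- a, 1:]) \<and>
    2 * of_nat (count (mset es) 1) = of_nat n + mat_trace T"
proof -
  obtain es where es: "char_poly T = (\<Prod>a\<leftarrow>es. [:- a, 1:])" "length es = n"
    using char_poly_factorized[OF T] by auto
  obtain B P Q where "schur_decomposition T es = (B, P, Q)" by (cases "schur_decomposition T es") auto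
  from schur_decomposition[OF T es(1) this]
  have sim: "similar_mat_wit T B P Q" and ut: "upper_triangular B" and diag: "diag_mat B = es" by auto
  have B: "B \<in> carrier_mat n n" and P: "P \<in> carrier_mat n n" and Q: "Q \<in> carrier_mat n n"
    and PQ: "P * Q = 1\<^sub>m n" and QP: "Q * P = 1\<^sub>m n" and TPBQ: "T = P * B * Q"
    using sim T unfolding similar_mat_wit_def Let_def by auto
  have signs: "set es \<subseteq> {1, -1}"
  proof
    fix a assume "a \<in> set es"
    then have "poly (char_poly T) a = 0" unfolding es(1) by (induction es) auto
    then obtain v where "v \<in> carrier_vec n" "v \<noteq> 0\<^sub>v n" "T *\<^sub>v v = a \<cdot>\<^sub>v v"
      by (rule root_char_poly_eigenvector[OF T])
    then show "a \<in> {1, -1}" using involution_eigenvalue[OF T TT] by auto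
  qed
  have "similar_mat (\<mu> \<cdot>\<^sub>m T) (\<mu> \<cdot>\<^sub>m B)"
    using sim by (intro similar_mat_smult) (auto simp: similar_mat_def)
  then have "char_poly (\<mu> \<cdot>\<^sub>m T) = char_poly (\<mu> \<cdot>\<^sub>m B)" by (rule char_poly_similar)
  also have "\<dots> = (\<Prod>a\<leftarrow>diag_mat (\<mu> \<cdot>\<^sub>m B). [:- a, 1:])"
    by (rule char_poly_upper_triangular[of _ n]) (use B ut in \<open>auto simp: upper_triangular_def\<close>)
  also have "diag_mat (\<mu> \<cdot>\<^sub>m B) = map (\<lambda>e. e * \<mu>) es"
    using B diag by (auto simp: diag_mat_def mult.commute)
  finally have cp: "char_poly (\<mu> \<cdot>\<^sub>m T) = (\<Prod>a\<in>#mset (map (\<lambda>e. e * \<mu>) es). [:- a, 1:])"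
    by (simp add: prod_mset_prod_list flip: mset_map)
  have "mat_trace T = mat_trace B" using mat_trace_conj[OF Q P B QP] TPBQ by simp
  also have "\<dots> = sum_list es" using diag by (simp add: mat_trace_eq_sum_list_diag)
  finally show ?thesis using count_sign_list[OF signs] es(2) signs cp by auto
qed

lemma involution_block_diagonal:
  fixes T :: "'a :: comm_ring_1 mat"
  assumes T: "T \<in> carrier_mat (m + n) (m + n)" and TT: "T * T = 1\<^sub>m (m + n)"
    and off: "\<And>i j. i < m \<Longrightarrow> m \<le> j \<Longrightarrow> j < m + n \<Longrightarrow> T $$ (i, j) = 0 \<and> T $$ (j, i) = 0"
  obtains T1 T4 where "T1 \<in> carrier_mat m m" "T4 \<in> carrier_mat n n"
    "T = four_block_mat T1 (0\<^sub>m m n) (0\<^sub>m n m) T4" "T1 * T1 = 1\<^sub>m m" "T4 * T4 = 1\<^sub>m n"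
proof -
  define T1 where "T1 = mat m m (\<lambda>(i, j). T $$ (i, j))"
  define T4 where "T4 = mat n n (\<lambda>(i, j). T $$ (i + m, j + m))"
  have T1: "T1 \<in> carrier_mat m m" and T4: "T4 \<in> carrier_mat n n" unfolding T1_def T4_def by auto
  have blocks: "T = four_block_mat T1 (0\<^sub>m m n) (0\<^sub>m n m) T4"
  proof (rule eq_matI)
    fix i j assume "i < dim_row (four_block_mat T1 (0\<^sub>m m n) (0\<^sub>m n m) T4)"
      "j < dim_col (four_block_mat T1 (0\<^sub>m m n) (0\<^sub>m n m) T4)"
    then have "i < m + n" "j < m + n" using T1 T4 by auto
    then show "T $$ (i, j) = four_block_mat T1 (0\<^sub>m m n) (0\<^sub>m n m) T4 $$ (i, j)"
      using off[of i j] off[of j i] T1 T4 by (auto simp: T1_def T4_def)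
  qed (use T T1 T4 in auto)
  have "four_block_mat (T1 * T1) (0\<^sub>m m n) (0\<^sub>m n m) (T4 * T4) = four_block_mat (1\<^sub>m m) (0\<^sub>m m n) (0\<^sub>m n m) (1\<^sub>m n)"
    using TT blocks T1 T4 by (simp add: mult_four_block_mat[OF T1 _ _ T4 T1 _ _ T4])
  note entries = arg_cong[OF this, of "\<lambda>M. M $$ (_, _)"]
  have "T1 * T1 = 1\<^sub>m m"
  proof (rule eq_matI)
    fix i j assume "i < dim_row (1\<^sub>m m :: 'a mat)" "j < dim_col (1\<^sub>m m :: 'a mat)"
    then show "(T1 * T1) $$ (i, j) = 1\<^sub>m m $$ (i, j)" using entries[of i j] T1 by simp
  qed (use T1 in auto)
  moreover have "T4 * T4 = 1\<^sub>m n"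
  proof (rule eq_matI)
    fix i j assume "i < dim_row (1\<^sub>m n :: 'a mat)" "j < dim_col (1\<^sub>m n :: 'a mat)"
    then show "(T4 * T4) $$ (i, j) = 1\<^sub>m n $$ (i, j)" using entries[of "i + m" "j + m"] T1 T4 by simp
  qed (use T4 in auto)
  ultimately show thesis using that T1 T4 blocks by blast
qed

lemma mult_four_block_diag_mat:
  fixes A B C D :: "'a :: semiring_0 mat"
  assumes A: "A \<in> carrier_mat m m" and B: "B \<in> carrier_mat m m"
    and C: "C \<in> carrier_mat n n" and D: "D \<in> carrier_mat n n"
  shows "four_block_mat A (0\<^sub>m m n) (0\<^sub>m n m) C * four_block_mat B (0\<^sub>m m n) (0\<^sub>m n m) D =
    four_block_mat (A * B) (0\<^sub>m m n) (0\<^sub>m n m) (C * D)"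
  using A B C D
  by (simp add: mult_four_block_mat[OF A zero_carrier_mat zero_carrier_mat C B zero_carrier_mat zero_carrier_mat D])

lemma char_poly_four_block_diag:
  fixes A D :: "complex mat"
  assumes A: "A \<in> carrier_mat m m" and D: "D \<in> carrier_mat n n"
  shows "char_poly (four_block_mat A (0\<^sub>m m n) (0\<^sub>m n m) D) = char_poly A * char_poly D"
  by (rule char_poly_0_block[of _ A "0\<^sub>m m n" n m D])
     (use A D char_poly_factorized[OF A] char_poly_factorized[OF D] in auto)

lemma sorted_first_block:
  fixes kl :: "'a :: linorder list"
  assumes srt: "sorted kl" and ne: "kl \<noteq> []"
  obtains m where "0 < m" "m \<le> length kl" "\<And>i. i < m \<Longrightarrow> kl ! i = kl ! 0"
    "\<And>j. m \<le> j \<Longrightarrow> j < length kl \<Longrightarrow> kl ! j \<noteq> kl ! 0"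
proof
  let ?m = "length (takeWhile (\<lambda>x. x = kl ! 0) kl)"
  show "0 < ?m" using ne by (cases kl) auto
  show "?m \<le> length kl" by (rule length_takeWhile_le)
  show "kl ! i = kl ! 0" if "i < ?m" for i
    using takeWhile_nth[OF that] nth_mem[OF that] set_takeWhileD by metis
  show "kl ! j \<noteq> kl ! 0" if j: "?m \<le> j" "j < length kl" for j
  proof -
    have "kl ! ?m \<noteq> kl ! 0" using nth_length_takeWhile[of "\<lambda>x. x = kl ! 0" kl] j by simp
    moreover have "kl ! 0 \<le> kl ! ?m" "kl ! ?m \<le> kl ! j"
      using sorted_nth_mono[OF srt] j by auto
    ultimately show ?thesis by simp
  qed
qed

lemma char_poly_involution_mult_mat_diag:
  fixes T :: "complex mat" and kl :: "nat list" and g :: "nat \<Rightarrow> complex"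
  assumes "T \<in> carrier_mat n n" "T * T = 1\<^sub>m n" "length kl = n" "sorted kl"
    "\<forall>i<n. \<forall>j<n. kl ! i \<noteq> kl ! j \<longrightarrow> T $$ (i, j) = 0"
  shows "\<exists>es. length es = n \<and> set es \<subseteq> {1, -1} \<and>
    char_poly (T * mat_diag n (\<lambda>k. g (kl ! k))) = (\<Prod>a\<in>#mset (map2 (\<lambda>e k. e * g k) es kl). [:- a, 1:]) \<and>
    2 * of_nat (count (mset es) 1) = of_nat n + mat_trace T"
  using assms
proof (induction n arbitrary: T kl rule: less_induct)
  case (less n)
  note T = less.prems(1) and TT = less.prems(2) and len = less.prems(3) and srt = less.prems(4)
    and blk = less.prems(5)
  show ?case
  proof (cases "n = 0")
    case True
    obtain as where "char_poly (T * mat_diag n (\<lambda>k. g (kl ! k))) = (\<Prod>a\<leftarrow>as. [:- a, 1:])" "length as = 0"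
      using char_poly_factorized[of "T * mat_diag n (\<lambda>k. g (kl ! k))" 0] T True by auto
    then show ?thesis using True len T by (intro exI[of _ "[]"]) (auto simp: mat_trace_def)
  next
    case False
    define k0 where "k0 = kl ! 0"
    obtain m where m: "0 < m" "m \<le> n" and in1: "\<And>i. i < m \<Longrightarrow> kl ! i = k0"
      and out: "\<And>j. m \<le> j \<Longrightarrow> j < n \<Longrightarrow> kl ! j \<noteq> k0"
      using sorted_first_block[OF srt] False len unfolding k0_def by (metis length_0_conv)
    define n' where "n' = n - m"
    define kl4 where "kl4 = drop m kl"
    have nn': "n = m + n'" unfolding n'_def using m by simp
    have kl4: "length kl4 = n'" "sorted kl4" "\<And>i. kl4 ! i = kl ! (m + i)"
      unfolding kl4_def n'_def using len srt m(2) sorted_wrt_drop by (auto simp: nth_drop)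
    have off: "T $$ (i, j) = 0 \<and> T $$ (j, i) = 0" if "i < m" "m \<le> j" "j < m + n'" for i j
    proof -
      have "i < n" "j < n" "kl ! i \<noteq> kl ! j" using that in1[of i] out[of j] nn' by auto
      then show ?thesis using blk by auto
    qed
    obtain T1 T4 where T1: "T1 \<in> carrier_mat m m" and T4: "T4 \<in> carrier_mat n' n'"
      and Tblocks: "T = four_block_mat T1 (0\<^sub>m m n') (0\<^sub>m n' m) T4"
      and T1T1: "T1 * T1 = 1\<^sub>m m" and T4T4: "T4 * T4 = 1\<^sub>m n'"
      by (rule involution_block_diagonal[of T m n']) (use T TT off nn' in auto)
    have T4_entry: "T4 $$ (i, j) = T $$ (m + i, m + j)" if "i < n'" "j < n'" for i j
      using that T1 T4 by (simp add: Tblocks)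
    obtain es4 where es4: "length es4 = n'" "set es4 \<subseteq> {1, -1}"
      "char_poly (T4 * mat_diag n' (\<lambda>k. g (kl4 ! k))) = (\<Prod>a\<in>#mset (map2 (\<lambda>e k. e * g k) es4 kl4). [:- a, 1:])"
      "2 * of_nat (count (mset es4) 1) = of_nat n' + mat_trace T4"
      using less.IH[of n' T4 kl4] T4 T4T4 kl4 blk T4_entry m nn' by auto
    obtain es1 where es1: "length es1 = m" "set es1 \<subseteq> {1, -1}"
      "char_poly (g k0 \<cdot>\<^sub>m T1) = (\<Prod>a\<in>#mset (map (\<lambda>e. e * g k0) es1). [:- a, 1:])"
      "2 * of_nat (count (mset es1) 1) = of_nat m + mat_trace T1"
      using char_poly_smult_involution[OF T1 T1T1] by blast
    have "mat_diag n (\<lambda>k. g (kl ! k)) =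
        four_block_mat (g k0 \<cdot>\<^sub>m 1\<^sub>m m) (0\<^sub>m m n') (0\<^sub>m n' m) (mat_diag n' (\<lambda>k. g (kl4 ! k)))"
      by (rule eq_matI) (use in1 kl4(3) nn' in \<open>auto simp: mat_diag_def\<close>)
    then have "T * mat_diag n (\<lambda>k. g (kl ! k)) =
        four_block_mat (g k0 \<cdot>\<^sub>m T1) (0\<^sub>m m n') (0\<^sub>m n' m) (T4 * mat_diag n' (\<lambda>k. g (kl4 ! k)))"
      using mult_four_block_diag_mat[OF T1 _ T4 mat_diag_dim] mult_smult_distrib[OF T1 one_carrier_mat, of "g k0"] T1
      by (simp add: Tblocks)
    then have "char_poly (T * mat_diag n (\<lambda>k. g (kl ! k))) =
        char_poly (g k0 \<cdot>\<^sub>m T1) * char_poly (T4 * mat_diag n' (\<lambda>k. g (kl4 ! k)))"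
      using char_poly_four_block_diag T1 T4 by simp
    moreover have "map2 (\<lambda>e k. e * g k) (es1 @ es4) kl =
        map (\<lambda>e. e * g k0) es1 @ map2 (\<lambda>e k. e * g k) es4 kl4"
    proof -
      have "kl = replicate m k0 @ kl4"
        using in1 len nn' kl4 by (intro nth_equalityI) (auto simp: nth_append)
      then show ?thesis using es1(1) by (simp add: zip_replicate2 map2_map_map)
    qed
    moreover have "mat_trace T = mat_trace T1 + mat_trace T4"
      using T1 T4 by (simp add: Tblocks mat_trace_eq_sum_list_diag diag_four_block_mat)
    ultimately show ?thesis using es1 es4 nn'
      by (intro exI[of _ "es1 @ es4"]) (auto simp: algebra_simps)
  qed
qed

lemma grouped_enumeration:
  fixes A :: "'b set" and f :: "'b \<Rightarrow> 'c"
  assumes "finite A"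
  obtains ks and key :: "'b \<Rightarrow> nat" and g :: "nat \<Rightarrow> 'c"
  where "distinct ks" "set ks = A" "sorted (map key ks)" "\<And>t. t \<in> A \<Longrightarrow> g (key t) = f t"
    "\<And>s t. f s = f t \<Longrightarrow> key s = key t"
proof -
  obtain vals where vals: "set vals = f ` A" using finite_list[of "f ` A"] assms by auto
  define key where "key t = (SOME j. j < length vals \<and> vals ! j = f t)" for t
  have key: "vals ! key t = f t" if "t \<in> A" for t
  proof -
    have "f t \<in> set vals" using that vals by auto
    then have "\<exists>j. j < length vals \<and> vals ! j = f t" by (simp add: in_set_conv_nth)
    then show ?thesis unfolding key_def by (rule someI2_ex) blast
  qed
  obtain base where base: "distinct base" "set base = A" using finite_distinct_list[OF assms] by blast
  show thesis
  proof (rule that[of "sort_key key base" key "(!) vals"])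
    show "key s = key t" if "f s = f t" for s t unfolding key_def that ..
  qed (simp_all add: base key)
qed

lemma mat_diag_commute_entry:
  fixes T :: "'a :: idom mat"
  assumes T: "T \<in> carrier_mat n n" and comm: "T * mat_diag n d = mat_diag n d * T"
    and i: "i < n" and j: "j < n" and ne: "d i \<noteq> d j"
  shows "T $$ (i, j) = 0"
proof -
  have "T $$ (i, j) * d j = d i * T $$ (i, j)"
    using arg_cong[OF comm, of "\<lambda>M. M $$ (i, j)"] T i j
    by (simp add: mat_diag_mult_right[OF T] mat_diag_mult_left[OF T])
  then have "T $$ (i, j) * (d j - d i) = 0" by (simp add: algebra_simps)
  then show ?thesis using ne by simp
qed

lemma involution_commuting_similar:
  fixes M M' T R D :: "'a :: comm_ring_1 mat"
  assumes mats: "{M, M', T, R, D} \<subseteq> carrier_mat n n"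
    and M'M: "M' * M = 1\<^sub>m n" and MM': "M * M' = 1\<^sub>m n"
    and TT: "T * T = 1\<^sub>m n" and TR: "T * R = R * T" and RM: "R * M = M * D"
  shows "similar_mat (T * R) ((M' * T * M) * D)" "(M' * T * M) * (M' * T * M) = 1\<^sub>m n"
    "(M' * T * M) * D = D * (M' * T * M)"
proof -
  have M: "M \<in> carrier_mat n n" and M': "M' \<in> carrier_mat n n" and T: "T \<in> carrier_mat n n"
    and R: "R \<in> carrier_mat n n" and D: "D \<in> carrier_mat n n" using mats by auto
  have MM'X: "M * (M' * X) = X" and TTX: "T * (T * X) = X" if "X \<in> carrier_mat n n" for X
    using assoc_mult_mat[OF M M' that] assoc_mult_mat[OF T T that] MM' TT that by simp_all
  have TRX: "T * (R * X) = R * (T * X)" and MDX: "M * (D * X) = R * (M * X)"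
    if "X \<in> carrier_mat n n" for X
    using assoc_mult_mat[OF T R that] assoc_mult_mat[OF R T that] assoc_mult_mat[OF M D that]
      assoc_mult_mat[OF R M that] TR RM that by simp_all
  \<comment> \<open>in the basis given by the columns of M, R becomes the diagonal D\<close>
  have M'RX: "M' * (R * X) = D * (M' * X)" if "X \<in> carrier_mat n n" for X
  proof -
    have "M' * (R * X) = M' * (M * (D * (M' * X)))" using MDX MM'X that M' by simp
    also have "\<dots> = D * (M' * X)" using assoc_mult_mat[OF M' M, of "D * (M' * X)" n] M'M M' D that by simp
    finally show ?thesis .
  qed
  note simps = assoc_mult_mat[of _ n n _ n _ n] MM'X TTX TRX MDX M'RX
  show "similar_mat (T * R) ((M' * T * M) * D)"
  proof (rule similar_matI[of _ _ M M' n])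
    show "T * R = M * ((M' * T * M) * D) * M'"
      using M M' T R D MM' RM by (simp add: simps)
  qed (use mats M'M MM' in auto)
  show "(M' * T * M) * (M' * T * M) = 1\<^sub>m n"
    using M M' T M'M by (simp add: simps)
  show "(M' * T * M) * D = D * (M' * T * M)"
    using M M' T R D RM by (simp add: simps flip: RM)
qed

lemma is_rep_carrier_mat: "is_rep G d \<rho> \<Longrightarrow> g \<in> carrier G \<Longrightarrow> \<rho> g \<in> carrier_mat d d"
  unfolding is_rep_def by auto

lemma is_rep_mult:
  "is_rep G d \<rho> \<Longrightarrow> g \<in> carrier G \<Longrightarrow> h \<in> carrier G \<Longrightarrow> \<rho> (g \<otimes>\<^bsub>G\<^esub> h) = \<rho> g * \<rho> h"
  unfolding is_rep_def by auto

lemma is_rep_one: "is_rep G d \<rho> \<Longrightarrow> \<rho> \<one>\<^bsub>G\<^esub> = 1\<^sub>m d"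
  unfolding is_rep_def by auto

lemma irreducible_rep_is_rep: "irreducible_rep G d \<rho> \<Longrightarrow> is_rep G d \<rho>"
  unfolding irreducible_rep_def by auto

lemma irreducible_rep_dim_pos: "irreducible_rep G d \<rho> \<Longrightarrow> 0 < d"
  unfolding irreducible_rep_def by auto

lemma intertwiner_kernel_invariant:
  assumes \<rho>: "is_rep G d \<rho>" and \<tau>: "is_rep G e \<tau>" and X: "X \<in> carrier_mat e d"
    and comm: "\<forall>g\<in>carrier G. X * \<rho> g = \<tau> g * X"
  shows "invariant_subspace G d \<rho> {v \<in> carrier_vec d. X *\<^sub>v v = 0\<^sub>v e}"
  unfolding invariant_subspace_def
proof (intro conjI ballI allI)
  fix v w assume v: "v \<in> {v \<in> carrier_vec d. X *\<^sub>v v = 0\<^sub>v e}"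
    and w: "w \<in> {v \<in> carrier_vec d. X *\<^sub>v v = 0\<^sub>v e}"
  then show "v + w \<in> {v \<in> carrier_vec d. X *\<^sub>v v = 0\<^sub>v e}"
    using X by (simp add: mult_add_distrib_mat_vec)
next
  fix a v assume "v \<in> {v \<in> carrier_vec d. X *\<^sub>v v = 0\<^sub>v e}"
  then show "a \<cdot>\<^sub>v v \<in> {v \<in> carrier_vec d. X *\<^sub>v v = 0\<^sub>v e}"
    using X by (simp add: mult_mat_vec)
next
  fix g v assume g: "g \<in> carrier G" and "v \<in> {v \<in> carrier_vec d. X *\<^sub>v v = 0\<^sub>v e}"
  then have v: "v \<in> carrier_vec d" "X *\<^sub>v v = 0\<^sub>v e" by auto
  have \<rho>g: "\<rho> g \<in> carrier_mat d d" and \<tau>g: "\<tau> g \<in> carrier_mat e e"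
    using is_rep_carrier_mat[OF \<rho> g] is_rep_carrier_mat[OF \<tau> g] by auto
  have "X *\<^sub>v (\<rho> g *\<^sub>v v) = (X * \<rho> g) *\<^sub>v v" using assoc_mult_mat_vec[OF X \<rho>g v(1)] by simp
  also have "\<dots> = \<tau> g *\<^sub>v (X *\<^sub>v v)" using comm g assoc_mult_mat_vec[OF \<tau>g X v(1)] by simp
  also have "\<dots> = 0\<^sub>v e" using \<tau>g v(2) by simp
  finally show "\<rho> g *\<^sub>v v \<in> {v \<in> carrier_vec d. X *\<^sub>v v = 0\<^sub>v e}" using \<rho>g v by simp
qed (use X in auto)

lemma irreducible_rep_invariant_trivial:
  "irreducible_rep G d \<rho> \<Longrightarrow> invariant_subspace G d \<rho> W \<Longrightarrow> W = {0\<^sub>v d} \<or> W = carrier_vec d"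
  unfolding irreducible_rep_def by blast

lemma intertwiner_image_invariant:
  assumes \<rho>: "is_rep G d \<rho>" and \<tau>: "is_rep G e \<tau>" and X: "X \<in> carrier_mat e d"
    and comm: "\<forall>g\<in>carrier G. X * \<rho> g = \<tau> g * X"
  shows "invariant_subspace G e \<tau> {X *\<^sub>v v | v. v \<in> carrier_vec d}"
  unfolding invariant_subspace_def
proof (intro conjI ballI allI)
  show "0\<^sub>v e \<in> {X *\<^sub>v v | v. v \<in> carrier_vec d}"
    using X by (intro CollectI exI[of _ "0\<^sub>v d"]) auto
  fix w1 w2 assume "w1 \<in> {X *\<^sub>v v | v. v \<in> carrier_vec d}" "w2 \<in> {X *\<^sub>v v | v. v \<in> carrier_vec d}"
  then obtain v1 v2 where "v1 \<in> carrier_vec d" "v2 \<in> carrier_vec d" "w1 = X *\<^sub>v v1" "w2 = X *\<^sub>v v2"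
    by auto
  then show "w1 + w2 \<in> {X *\<^sub>v v | v. v \<in> carrier_vec d}"
    using X by (intro CollectI exI[of _ "v1 + v2"]) (auto simp: mult_add_distrib_mat_vec)
next
  fix a w assume "w \<in> {X *\<^sub>v v | v. v \<in> carrier_vec d}"
  then obtain v where "v \<in> carrier_vec d" "w = X *\<^sub>v v" by auto
  then show "a \<cdot>\<^sub>v w \<in> {X *\<^sub>v v | v. v \<in> carrier_vec d}"
    using X by (intro CollectI exI[of _ "a \<cdot>\<^sub>v v"]) (auto simp: mult_mat_vec)
next
  fix g w assume g: "g \<in> carrier G" and "w \<in> {X *\<^sub>v v | v. v \<in> carrier_vec d}"
  then obtain v where v: "v \<in> carrier_vec d" "w = X *\<^sub>v v" by auto
  have \<rho>g: "\<rho> g \<in> carrier_mat d d" and \<tau>g: "\<tau> g \<in> carrier_mat e e"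
    using is_rep_carrier_mat[OF \<rho> g] is_rep_carrier_mat[OF \<tau> g] by auto
  have "\<tau> g *\<^sub>v w = (X * \<rho> g) *\<^sub>v v" using comm g assoc_mult_mat_vec[OF \<tau>g X v(1)] v(2) by simp
  also have "\<dots> = X *\<^sub>v (\<rho> g *\<^sub>v v)" using assoc_mult_mat_vec[OF X \<rho>g v(1)] .
  finally show "\<tau> g *\<^sub>v w \<in> {X *\<^sub>v v | v. v \<in> carrier_vec d}" using \<rho>g v by auto
qed (use X in auto)

lemma schur_lemma:
  assumes irr\<rho>: "irreducible_rep G d \<rho>" and irr\<tau>: "irreducible_rep G e \<tau>"
    and X: "X \<in> carrier_mat e d" and comm: "\<forall>g\<in>carrier G. X * \<rho> g = \<tau> g * X"
  shows "X = 0\<^sub>m e d \<or> (d = e \<and> invertible_mat X)"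
proof (cases "X = 0\<^sub>m e d")
  case False
  then obtain i j where ij: "i < e" "j < d" "X $$ (i, j) \<noteq> 0"
    using X by (metis carrier_matD(1) carrier_matD(2) eq_matI index_zero_mat(1) index_zero_mat(2) index_zero_mat(3))
  have \<rho>: "is_rep G d \<rho>" and \<tau>: "is_rep G e \<tau>" using irr\<rho> irr\<tau> irreducible_rep_is_rep by auto
  have Xj: "X *\<^sub>v unit_vec d j \<noteq> 0\<^sub>v e"
  proof
    assume "X *\<^sub>v unit_vec d j = 0\<^sub>v e"
    then have "(X *\<^sub>v unit_vec d j) $ i = 0" using ij by simp
    then show False using index_mult_mat_vec_unit_vec[OF X ij(1,2)] ij by simp
  qed
  then have "unit_vec d j \<notin> {v \<in> carrier_vec d. X *\<^sub>v v = 0\<^sub>v e}" by simp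
  then have "{v \<in> carrier_vec d. X *\<^sub>v v = 0\<^sub>v e} = {0\<^sub>v d}"
    using irreducible_rep_invariant_trivial[OF irr\<rho> intertwiner_kernel_invariant[OF \<rho> \<tau> X comm]]
      unit_vec_carrier[of d j] by blast
  then have injX: "inj_mat X d" unfolding inj_mat_def using X by auto
  have "X *\<^sub>v unit_vec d j \<in> {X *\<^sub>v v | v. v \<in> carrier_vec d}" by auto
  then have "{X *\<^sub>v v | v. v \<in> carrier_vec d} = carrier_vec e"
    using irreducible_rep_invariant_trivial[OF irr\<tau> intertwiner_image_invariant[OF \<rho> \<tau> X comm]] Xj
    by blast
  then obtain Y where Y: "Y \<in> carrier_mat d e" "X * Y = 1\<^sub>m e"
    using surj_mat_right_inverse[OF X] by blast
  have "e \<le> d" using inj_mat_dim_le[OF Y(1) inj_mat_of_right_inverse[OF Y(1) X Y(2)]] .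
  moreover have "d \<le> e" using inj_mat_dim_le[OF X injX] .
  ultimately have de: "d = e" by simp
  then obtain B where "B \<in> carrier_mat d d" "X * B = 1\<^sub>m d" "B * X = 1\<^sub>m d"
    using inj_mat_square_inverse[of X d] X injX by auto
  then have "invertible_mat X"
    unfolding invertible_mat_def inverts_mat_def using X de by auto
  then show ?thesis using de by simp
qed simp

lemma schur_lemma_inequivalent:
  assumes irr\<rho>: "irreducible_rep G d \<rho>" and irr\<tau>: "irreducible_rep G e \<tau>"
    and X: "X \<in> carrier_mat e d" and comm: "\<forall>g\<in>carrier G. X * \<rho> g = \<tau> g * X"
    and ne: "\<not> equiv_rep G d \<rho> e \<tau>"
  shows "X = 0\<^sub>m e d"
  using schur_lemma[OF irr\<rho> irr\<tau> X comm] ne X comm unfolding equiv_rep_def by auto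

lemma equiv_rep_intertwiner:
  assumes eq: "equiv_rep G d \<rho> e \<tau>" and \<rho>: "is_rep G d \<rho>" and \<tau>: "is_rep G e \<tau>"
  obtains Q where "d = e" "Q \<in> carrier_mat d d" "inj_mat Q d" "\<forall>g\<in>carrier G. \<rho> g * Q = Q * \<tau> g"
proof -
  obtain P where de: "d = e" and P: "P \<in> carrier_mat d d" "invertible_mat P"
    and P\<rho>: "\<forall>g\<in>carrier G. P * \<rho> g = \<tau> g * P"
    using eq unfolding equiv_rep_def by blast
  obtain Q where Q: "Q \<in> carrier_mat d d" "P * Q = 1\<^sub>m d" "Q * P = 1\<^sub>m d"
    using invertible_mat_inverse[OF P] by blast
  have "\<rho> g * Q = Q * \<tau> g" if g: "g \<in> carrier G" for g
  proof -
    have \<rho>g: "\<rho> g \<in> carrier_mat d d" and \<tau>g: "\<tau> g \<in> carrier_mat d d"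
      using is_rep_carrier_mat[OF \<rho> g] is_rep_carrier_mat[OF \<tau> g] de by auto
    have "Q * (P * \<rho> g) = \<rho> g" using assoc_mult_mat[OF Q(1) P(1) \<rho>g] Q(3) \<rho>g by simp
    then have "\<rho> g * Q = Q * (\<tau> g * P) * Q" using P\<rho> g by simp
    also have "\<dots> = Q * \<tau> g * (P * Q)"
      using assoc_mult_mat[OF Q(1) \<tau>g P(1)] assoc_mult_mat[OF mult_carrier_mat[OF Q(1) \<tau>g] P(1) Q(1)] by simp
    finally show ?thesis using Q \<tau>g by simp
  qed
  then show thesis using that de Q inj_mat_of_right_inverse[OF Q(1) P(1) Q(2)] by blast
qed

lemma invertible_mat_inj_mat:
  fixes A :: "'a :: field mat"
  assumes A: "A \<in> carrier_mat n n" and inv: "invertible_mat A"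
  shows "inj_mat A n"
  using invertible_mat_inverse[OF A inv] inj_mat_of_right_inverse[OF A] by metis

lemma commute_minus_smult_one_mat:
  fixes X A :: "'a :: comm_ring_1 mat"
  assumes X: "X \<in> carrier_mat d d" and A: "A \<in> carrier_mat d d" and comm: "X * A = A * X"
  shows "(X - c \<cdot>\<^sub>m 1\<^sub>m d) * A = A * (X - c \<cdot>\<^sub>m 1\<^sub>m d)"
proof -
  have "(X - c \<cdot>\<^sub>m 1\<^sub>m d) * A = X * A - c \<cdot>\<^sub>m A"
    using X A mult_smult_assoc_mat[OF one_carrier_mat A, of c] by (simp add: minus_mult_distrib_mat[of _ d d])
  also have "\<dots> = A * (X - c \<cdot>\<^sub>m 1\<^sub>m d)"
    using X A comm mult_smult_distrib[OF A one_carrier_mat, of c] by (simp add: mult_minus_distrib_mat[of _ d d])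
  finally show ?thesis .
qed

lemma schur_lemma_scalar:
  assumes irr: "irreducible_rep G d \<rho>" and X: "X \<in> carrier_mat d d"
    and comm: "\<forall>g\<in>carrier G. X * \<rho> g = \<rho> g * X"
  shows "\<exists>c. X = c \<cdot>\<^sub>m 1\<^sub>m d"
proof -
  have \<rho>: "is_rep G d \<rho>" and d: "0 < d"
    using irr irreducible_rep_is_rep irreducible_rep_dim_pos by auto
  obtain as where as: "char_poly X = (\<Prod>a\<leftarrow>as. [:- a, 1:])" "length as = d"
    using char_poly_factorized[OF X] by auto
  then obtain c rest where "as = c # rest" using d by (cases as) auto
  then have "poly (char_poly X) c = 0" unfolding as(1) by simp
  then obtain v where v: "v \<in> carrier_vec d" "v \<noteq> 0\<^sub>v d" "X *\<^sub>v v = c \<cdot>\<^sub>v v"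
    by (rule root_char_poly_eigenvector[OF X])
  \<comment> \<open>X - c is again an intertwiner, and it is not invertible\<close>
  define Y where "Y = X - c \<cdot>\<^sub>m 1\<^sub>m d"
  have Y: "Y \<in> carrier_mat d d" unfolding Y_def by (simp add: minus_carrier_mat)
  have "\<forall>g\<in>carrier G. Y * \<rho> g = \<rho> g * Y"
    unfolding Y_def using commute_minus_smult_one_mat[OF X is_rep_carrier_mat[OF \<rho>]] comm by blast
  moreover have "(c \<cdot>\<^sub>m 1\<^sub>m d) *\<^sub>v v = c \<cdot>\<^sub>v v"
    by (rule eq_vecI) (use v in \<open>auto simp: smult_scalar_prod_distrib\<close>)
  then have "Y *\<^sub>v v = 0\<^sub>v d" unfolding Y_def using X v by (simp add: minus_mult_distrib_mat_vec[of _ d d])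
  then have "\<not> invertible_mat Y" using invertible_mat_inj_mat[OF Y] v Y unfolding inj_mat_def by auto
  ultimately have "Y = 0\<^sub>m d d" using schur_lemma[OF irr irr Y] by blast
  have "X = c \<cdot>\<^sub>m 1\<^sub>m d"
  proof (rule eq_matI)
    fix i j assume "i < dim_row (c \<cdot>\<^sub>m 1\<^sub>m d)" "j < dim_col (c \<cdot>\<^sub>m 1\<^sub>m d :: complex mat)"
    then show "X $$ (i, j) = (c \<cdot>\<^sub>m 1\<^sub>m d) $$ (i, j)"
      using arg_cong[OF \<open>Y = 0\<^sub>m d d\<close>, of "\<lambda>M. M $$ (i, j)"] X by (auto simp: Y_def)
  qed (use X in auto)
  then show ?thesis by blast
qed

context monoid
begin

lemma is_rep_restrict_inj_mat:
  assumes rep: "is_rep G k \<pi>" and B: "B \<in> carrier_mat k m" "inj_mat B m"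
    and stable: "\<And>g j. g \<in> carrier G \<Longrightarrow> j < m \<Longrightarrow> \<exists>c\<in>carrier_vec m. \<pi> g *\<^sub>v col B j = B *\<^sub>v c"
  shows "\<exists>\<pi>'. is_rep G m \<pi>' \<and> (\<forall>g\<in>carrier G. \<pi> g * B = B * \<pi>' g)"
proof -
  define coef where "coef g j = (SOME c. c \<in> carrier_vec m \<and> \<pi> g *\<^sub>v col B j = B *\<^sub>v c)" for g j
  have coef: "coef g j \<in> carrier_vec m \<and> \<pi> g *\<^sub>v col B j = B *\<^sub>v coef g j"
    if "g \<in> carrier G" "j < m" for g j
    unfolding coef_def by (rule someI_ex) (use stable[OF that] in auto)
  define \<pi>' where "\<pi>' g = mat m m (\<lambda>(i, j). coef g j $ i)" for g
  have \<pi>'c: "\<pi>' g \<in> carrier_mat m m" for g unfolding \<pi>'_def by simp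
  have inter: "\<pi> g * B = B * \<pi>' g" if g: "g \<in> carrier G" for g
  proof (rule mat_col_eqI)
    fix j assume "j < dim_col (B * \<pi>' g)"
    then have j: "j < m" using \<pi>'c[of g] by simp
    have "coef g j = col (\<pi>' g) j" by (rule eq_vecI) (use coef[OF g j] j in \<open>auto simp: \<pi>'_def\<close>)
    then show "col (\<pi> g * B) j = col (B * \<pi>' g) j"
      using coef[OF g j] col_mult2[OF is_rep_carrier_mat[OF rep g] B(1) j] col_mult2[OF B(1) \<pi>'c j] by simp
  qed (use is_rep_carrier_mat[OF rep g] B \<pi>'c[of g] in auto)
  have "is_rep G m \<pi>'" unfolding is_rep_def
  proof (intro conjI ballI)
    fix g h assume g: "g \<in> carrier G" and h: "h \<in> carrier G"
    have \<pi>g: "\<pi> g \<in> carrier_mat k k" and \<pi>h: "\<pi> h \<in> carrier_mat k k"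
      using is_rep_carrier_mat[OF rep g] is_rep_carrier_mat[OF rep h] .
    have "B * \<pi>' (g \<otimes> h) = \<pi> g * \<pi> h * B"
      using inter[of "g \<otimes> h"] is_rep_mult[OF rep g h] g h by simp
    also have "\<dots> = \<pi> g * (\<pi> h * B)" by (rule assoc_mult_mat[OF \<pi>g \<pi>h B(1)])
    also have "\<dots> = (\<pi> g * B) * \<pi>' h" using inter[OF h] assoc_mult_mat[OF \<pi>g B(1) \<pi>'c] by simp
    also have "\<dots> = B * (\<pi>' g * \<pi>' h)" using inter[OF g] assoc_mult_mat[OF B(1) \<pi>'c \<pi>'c] by simp
    finally show "\<pi>' (g \<otimes> h) = \<pi>' g * \<pi>' h"
      by (rule inj_mat_cancel_left[OF B \<pi>'c mult_carrier_mat[OF \<pi>'c \<pi>'c]])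
  next
    have "B * \<pi>' \<one> = B * 1\<^sub>m m" using inter[of "\<one>"] is_rep_one[OF rep] B by simp
    then show "\<pi>' \<one> = 1\<^sub>m m" by (rule inj_mat_cancel_left[OF B \<pi>'c one_carrier_mat])
  qed (rule \<pi>'c)
  then show ?thesis using inter by blast
qed

lemma invariant_subspace_subrep:
  assumes rep: "is_rep G k \<pi>" and inv: "invariant_subspace G k \<pi> U" and ne: "U \<noteq> {0\<^sub>v k}"
  shows "\<exists>m B \<pi>'. 0 < m \<and> (U \<noteq> carrier_vec k \<longrightarrow> m < k) \<and> B \<in> carrier_mat k m \<and> inj_mat B m \<and>
     (\<forall>c\<in>carrier_vec m. B *\<^sub>v c \<in> U) \<and> is_rep G m \<pi>' \<and> (\<forall>g\<in>carrier G. \<pi> g * B = B * \<pi>' g)"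
proof -
  have Uc: "U \<subseteq> carrier_vec k" and U0: "0\<^sub>v k \<in> U" and Uadd: "\<forall>v\<in>U. \<forall>w\<in>U. v + w \<in> U"
    and Usmult: "\<forall>a. \<forall>v\<in>U. a \<cdot>\<^sub>v v \<in> U" and U\<pi>: "\<forall>g\<in>carrier G. \<forall>v\<in>U. \<pi> g *\<^sub>v v \<in> U"
    using inv unfolding invariant_subspace_def by auto
  obtain m B where B: "B \<in> carrier_mat k m" "inj_mat B m" and BU: "\<forall>c\<in>carrier_vec m. B *\<^sub>v c \<in> U"
    and UB: "\<forall>u\<in>U. \<exists>c\<in>carrier_vec m. u = B *\<^sub>v c"
    using subspace_eq_inj_mat_image[OF Uc U0 Uadd Usmult] by auto
  have "0 < m"
  proof (rule ccontr)
    assume "\<not> 0 < m"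
    then have "B *\<^sub>v c = 0\<^sub>v k" if "c \<in> carrier_vec m" for c
      using B that by (intro eq_vecI) (auto simp: scalar_prod_def)
    then have "U \<subseteq> {0\<^sub>v k}" using UB by auto
    then show False using ne U0 by auto
  qed
  moreover have "m < k" if "U \<noteq> carrier_vec k"
  proof (rule ccontr)
    assume "\<not> m < k"
    then have mk: "m = k" using inj_mat_dim_le[OF B] by simp
    then obtain B' where B': "B' \<in> carrier_mat k k" "B * B' = 1\<^sub>m k"
      using inj_mat_square_inverse[of B k] B by auto
    have "v \<in> U" if v: "v \<in> carrier_vec k" for v
    proof -
      have "v = B *\<^sub>v (B' *\<^sub>v v)" using B' v B mk by (simp flip: assoc_mult_mat_vec)
      then show ?thesis using BU B' v mk by (metis mult_mat_vec_carrier)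
    qed
    then show False using that Uc by auto
  qed
  moreover obtain \<pi>' where "is_rep G m \<pi>'" "\<forall>g\<in>carrier G. \<pi> g * B = B * \<pi>' g"
  proof -
    have "\<exists>c\<in>carrier_vec m. \<pi> g *\<^sub>v col B j = B *\<^sub>v c" if "g \<in> carrier G" "j < m" for g j
      using UB U\<pi> BU col_eq_mult_mat_vec_unit_vec[OF B(1) \<open>j < m\<close>] that by simp
    then show thesis using is_rep_restrict_inj_mat[OF rep B] that by blast
  qed
  ultimately show ?thesis using B BU by blast
qed

lemma irreducible_subrep_exists:
  assumes "is_rep G k \<pi>" "0 < k"
  shows "\<exists>m \<rho> B. irreducible_rep G m \<rho> \<and> B \<in> carrier_mat k m \<and> inj_mat B m \<and>
    (\<forall>g\<in>carrier G. \<pi> g * B = B * \<rho> g)"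
  using assms
proof (induction k arbitrary: \<pi> rule: less_induct)
  case (less k)
  note rep = less.prems(1)
  show ?case
  proof (cases "irreducible_rep G k \<pi>")
    case True
    have "\<pi> g * 1\<^sub>m k = 1\<^sub>m k * \<pi> g" if "g \<in> carrier G" for g
      using is_rep_carrier_mat[OF rep that] by simp
    then show ?thesis using True inj_mat_one[of k]
      by (intro exI[of _ k] exI[of _ \<pi>] exI[of _ "1\<^sub>m k"]) auto
  next
    case False
    then obtain W where W: "invariant_subspace G k \<pi> W" "W \<noteq> {0\<^sub>v k}" "W \<noteq> carrier_vec k"
      using less.prems unfolding irreducible_rep_def by auto
    obtain m B \<pi>' where sub: "0 < m" "m < k" "B \<in> carrier_mat k m" "inj_mat B m"
      "is_rep G m \<pi>'" "\<forall>g\<in>carrier G. \<pi> g * B = B * \<pi>' g"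
      using invariant_subspace_subrep[OF rep W(1,2)] W(3) by blast
    obtain m2 \<rho> B2 where irr: "irreducible_rep G m2 \<rho>" "B2 \<in> carrier_mat m m2" "inj_mat B2 m2"
      "\<forall>g\<in>carrier G. \<pi>' g * B2 = B2 * \<rho> g"
      using less.IH[OF sub(2) sub(5) sub(1)] by blast
    have "\<forall>g\<in>carrier G. \<pi> g * (B * B2) = (B * B2) * \<rho> g"
      using mult_intertwining_mat[OF is_rep_carrier_mat[OF rep] is_rep_carrier_mat[OF sub(5)]
          is_rep_carrier_mat[OF irreducible_rep_is_rep[OF irr(1)]] sub(3) irr(2)] sub(6) irr(4)
      by blast
    then show ?thesis using irr inj_mat_mult[OF sub(3,4) irr(2,3)] sub(3)
      by (intro exI[of _ m2] exI[of _ \<rho>] exI[of _ "B * B2"]) auto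
  qed
qed

end

lemma sum_mult_sum_swap_left:
  fixes a :: "'x \<Rightarrow> 'a :: semiring_0"
  shows "(\<Sum>r\<in>R. (\<Sum>g\<in>A. a g * b g r) * c r) = (\<Sum>g\<in>A. a g * (\<Sum>r\<in>R. b g r * c r))"
proof -
  have "(\<Sum>r\<in>R. (\<Sum>g\<in>A. a g * b g r) * c r) = (\<Sum>r\<in>R. \<Sum>g\<in>A. a g * (b g r * c r))"
    by (simp add: sum_distrib_right mult.assoc)
  also have "\<dots> = (\<Sum>g\<in>A. \<Sum>r\<in>R. a g * (b g r * c r))" by (rule sum.swap)
  finally show ?thesis by (simp add: sum_distrib_left)
qed

lemma sum_mult_sum_swap_right:
  fixes t :: "'x \<Rightarrow> 'a :: semiring_0"
  shows "(\<Sum>r\<in>R. t r * (\<Sum>g\<in>A. a g r * b g)) = (\<Sum>g\<in>A. (\<Sum>r\<in>R. t r * a g r) * b g)"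
proof -
  have "(\<Sum>r\<in>R. t r * (\<Sum>g\<in>A. a g r * b g)) = (\<Sum>r\<in>R. \<Sum>g\<in>A. (t r * a g r) * b g)"
    by (simp add: sum_distrib_left mult.assoc)
  also have "\<dots> = (\<Sum>g\<in>A. \<Sum>r\<in>R. (t r * a g r) * b g)" by (rule sum.swap)
  finally show ?thesis by (simp add: sum_distrib_right)
qed

lemma card_unique_solution:
  assumes "\<And>s. s \<in> S \<Longrightarrow> e s = y \<longleftrightarrow> s = w" and "w \<in> S \<longleftrightarrow> P"
  shows "card {s \<in> S. e s = y} = (if P then 1 else 0)"
proof -
  have "{s \<in> S. e s = y} = (if P then {w} else {})" using assms by auto
  then show ?thesis by simp
qed

context group
begin

lemma is_rep_mult_inv: "is_rep G d \<rho> \<Longrightarrow> g \<in> carrier G \<Longrightarrow> \<rho> g * \<rho> (inv g) = 1\<^sub>m d"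
  using is_rep_mult[of G d \<rho> g "inv g"] is_rep_one[of G d \<rho>] by simp

lemma sum_carrier_mult_right: "h \<in> carrier G \<Longrightarrow> (\<Sum>g\<in>carrier G. f (g \<otimes> h)) = (\<Sum>g\<in>carrier G. f g)"
  by (rule sum.reindex_bij_witness[of _ "\<lambda>g. g \<otimes> inv h" "\<lambda>g. g \<otimes> h"]) (auto simp: m_assoc)

lemma inv_mult_cancel_left: "x \<in> carrier G \<Longrightarrow> y \<in> carrier G \<Longrightarrow> inv x \<otimes> (x \<otimes> y) = y"
  by (simp add: m_assoc[symmetric])

lemma mult_inv_cancel_left: "x \<in> carrier G \<Longrightarrow> y \<in> carrier G \<Longrightarrow> x \<otimes> (inv x \<otimes> y) = y"
  by (simp add: m_assoc[symmetric])

lemma sum_conj_closed_swap: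
  assumes S: "S \<subseteq> carrier G" and conj: "\<forall>g\<in>carrier G. \<forall>s\<in>S. g \<otimes> s \<otimes> inv g \<in> S"
    and g: "g \<in> carrier G"
  shows "(\<Sum>s\<in>S. F (g \<otimes> s)) = (\<Sum>s\<in>S. F (s \<otimes> g))"
proof (rule sum.reindex_bij_witness[of _ "\<lambda>s. inv g \<otimes> s \<otimes> g" "\<lambda>s. g \<otimes> s \<otimes> inv g"])
  fix s assume s: "s \<in> S"
  then have sc: "s \<in> carrier G" using S by auto
  show "inv g \<otimes> (g \<otimes> s \<otimes> inv g) \<otimes> g = s" "F (g \<otimes> s \<otimes> inv g \<otimes> g) = F (g \<otimes> s)"
    using sc g by (simp_all add: m_assoc inv_mult_cancel_left)
  show "g \<otimes> s \<otimes> inv g \<in> S" using conj g s by auto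
  show "g \<otimes> (inv g \<otimes> s \<otimes> g) \<otimes> inv g = s" using sc g by (simp add: m_assoc mult_inv_cancel_left)
  show "inv g \<otimes> s \<otimes> g \<in> S" using conj[rule_format, of "inv g" s] g s by simp
qed

lemma sum_irreducible_conj_closed:
  assumes S: "S \<subseteq> carrier G" and conj: "\<forall>g\<in>carrier G. \<forall>s\<in>S. g \<otimes> s \<otimes> inv g \<in> S"
    and irr: "irreducible_rep G d \<rho>" and p: "p < d" and q: "q < d"
  shows "(\<Sum>s\<in>S. \<rho> s $$ (p, q)) = (if p = q then rep_lambda S d \<rho> else 0)"
proof -
  have \<rho>: "is_rep G d \<rho>" and d: "0 < d" using irr irreducible_rep_is_rep irreducible_rep_dim_pos by auto
  define X where "X = mat d d (\<lambda>(p, q). \<Sum>s\<in>S. \<rho> s $$ (p, q))"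
  have X: "X \<in> carrier_mat d d" unfolding X_def by simp
  have "X * \<rho> g = \<rho> g * X" if g: "g \<in> carrier G" for g
  proof (rule eq_matI)
    have \<rho>g: "\<rho> g \<in> carrier_mat d d" by (rule is_rep_carrier_mat[OF \<rho> g])
    have \<rho>s: "\<rho> s \<in> carrier_mat d d" if "s \<in> S" for s using is_rep_carrier_mat[OF \<rho>] S that by auto
    fix p q assume "p < dim_row (\<rho> g * X)" "q < dim_col (\<rho> g * X)"
    then have p: "p < d" and q: "q < d" using \<rho>g X by auto
    have "(X * \<rho> g) $$ (p, q) = (\<Sum>r<d. (\<Sum>s\<in>S. \<rho> s $$ (p, r)) * \<rho> g $$ (r, q))"
      using index_mult_mat_sum[OF X \<rho>g p q] p by (simp add: X_def)
    also have "\<dots> = (\<Sum>s\<in>S. \<Sum>r<d. \<rho> s $$ (p, r) * \<rho> g $$ (r, q))"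
      by (simp add: sum_distrib_right) (rule sum.swap)
    also have "\<dots> = (\<Sum>s\<in>S. \<rho> (s \<otimes> g) $$ (p, q))"
      using is_rep_mult[OF \<rho> _ g] S index_mult_mat_sum[OF \<rho>s \<rho>g p q] by (intro sum.cong) auto
    also have "\<dots> = (\<Sum>s\<in>S. \<rho> (g \<otimes> s) $$ (p, q))" by (rule sum_conj_closed_swap[OF S conj g, symmetric])
    also have "\<dots> = (\<Sum>s\<in>S. \<Sum>r<d. \<rho> g $$ (p, r) * \<rho> s $$ (r, q))"
      using is_rep_mult[OF \<rho> g] S index_mult_mat_sum[OF \<rho>g \<rho>s p q] by (intro sum.cong) auto
    also have "\<dots> = (\<Sum>r<d. \<rho> g $$ (p, r) * (\<Sum>s\<in>S. \<rho> s $$ (r, q)))"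
      by (simp add: sum_distrib_left) (rule sum.swap)
    also have "\<dots> = (\<rho> g * X) $$ (p, q)"
      using index_mult_mat_sum[OF \<rho>g X p q] q by (simp add: X_def)
    finally show "(X * \<rho> g) $$ (p, q) = (\<rho> g * X) $$ (p, q)" .
  qed (use X is_rep_carrier_mat[OF \<rho> g] in auto)
  then obtain c where c: "X = c \<cdot>\<^sub>m 1\<^sub>m d" using schur_lemma_scalar[OF irr X] by blast
  \<comment> \<open>the scalar is determined by taking traces\<close>
  have "(\<Sum>s\<in>S. character \<rho> s) = (\<Sum>s\<in>S. \<Sum>p<d. \<rho> s $$ (p, p))"
    using is_rep_carrier_mat[OF \<rho>] S by (auto simp: character_def mat_trace_def intro!: sum.cong)
  also have "\<dots> = (\<Sum>p<d. X $$ (p, p))" unfolding X_def by (simp add: sum.swap[of _ S])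
  also have "\<dots> = of_nat d * c" using c by simp
  finally have "c = rep_lambda S d \<rho>" unfolding rep_lambda_def using d by (simp add: field_simps)
  moreover have "(\<Sum>s\<in>S. \<rho> s $$ (p, q)) = X $$ (p, q)" using p q by (simp add: X_def)
  ultimately show ?thesis using c p q by simp
qed

lemma conj_closed_mult_swap:
  assumes conj: "\<forall>g\<in>carrier G. \<forall>s\<in>S. g \<otimes> s \<otimes> inv g \<in> S"
    and x: "x \<in> carrier G" and y: "y \<in> carrier G"
  shows "x \<otimes> y \<in> S \<longleftrightarrow> y \<otimes> x \<in> S"
proof -
  have "y \<otimes> (x \<otimes> y) \<otimes> inv y = y \<otimes> x" "x \<otimes> (y \<otimes> x) \<otimes> inv x = x \<otimes> y"
    using x y by (simp_all add: m_assoc)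
  then show ?thesis using conj x y by (metis m_closed)
qed

lemma involution_image_eq_iff:
  assumes "\<sigma> ` S = S" and "\<forall>g\<in>carrier G. \<sigma> (\<sigma> g) = g" and "x \<in> carrier G"
  shows "\<sigma> x \<in> S \<longleftrightarrow> x \<in> S"
  using assms by (metis imageE imageI)

end

locale finite_group = group G for G (structure) +
  assumes finite_carrier: "finite (carrier G)"
begin

definition averaged_unit_mat ::
    "('a \<Rightarrow> complex mat) \<Rightarrow> ('a \<Rightarrow> complex mat) \<Rightarrow> nat \<Rightarrow> nat \<Rightarrow> nat \<Rightarrow> nat \<Rightarrow> complex mat" where
  "averaged_unit_mat \<tau> \<rho> e d b c = mat e d (\<lambda>(p, q). \<Sum>g\<in>carrier G. \<tau> (inv g) $$ (p, b) * \<rho> g $$ (c, q))"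

lemma averaged_unit_mat_carrier: "averaged_unit_mat \<tau> \<rho> e d b c \<in> carrier_mat e d"
  unfolding averaged_unit_mat_def by simp

lemma averaged_unit_mat_intertwines:
  assumes \<rho>: "is_rep G d \<rho>" and \<tau>: "is_rep G e \<tau>" and b: "b < e" and c: "c < d"
    and h: "h \<in> carrier G"
  shows "averaged_unit_mat \<tau> \<rho> e d b c * \<rho> h = \<tau> h * averaged_unit_mat \<tau> \<rho> e d b c"
proof (rule eq_matI)
  let ?X = "averaged_unit_mat \<tau> \<rho> e d b c"
  have X: "?X \<in> carrier_mat e d" by (rule averaged_unit_mat_carrier)
  have \<rho>h: "\<rho> h \<in> carrier_mat d d" and \<tau>h: "\<tau> h \<in> carrier_mat e e"
    using is_rep_carrier_mat[OF \<rho> h] is_rep_carrier_mat[OF \<tau> h] by auto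
  fix p q assume "p < dim_row (\<tau> h * ?X)" "q < dim_col (\<tau> h * ?X)"
  then have p: "p < e" and q: "q < d" using \<tau>h X by auto
  have "(?X * \<rho> h) $$ (p, q) = (\<Sum>r<d. (\<Sum>g\<in>carrier G. \<tau> (inv g) $$ (p, b) * \<rho> g $$ (c, r)) * \<rho> h $$ (r, q))"
    using index_mult_mat_sum[OF X \<rho>h p q] p by (simp add: averaged_unit_mat_def)
  also have "\<dots> = (\<Sum>g\<in>carrier G. \<tau> (inv g) $$ (p, b) * (\<Sum>r<d. \<rho> g $$ (c, r) * \<rho> h $$ (r, q)))"
    by (rule sum_mult_sum_swap_left)
  also have "\<dots> = (\<Sum>g\<in>carrier G. \<tau> (inv g) $$ (p, b) * \<rho> (g \<otimes> h) $$ (c, q))"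
    using is_rep_mult[OF \<rho> _ h] index_mult_mat_sum[OF is_rep_carrier_mat[OF \<rho>] \<rho>h c q] by simp
  also have "\<dots> = (\<Sum>g\<in>carrier G. \<tau> (h \<otimes> inv g) $$ (p, b) * \<rho> g $$ (c, q))"
    by (subst sum_carrier_mult_right[OF h, symmetric])
       (use h in \<open>auto intro!: sum.cong simp: inv_mult_group m_assoc[symmetric]\<close>)
  also have "\<dots> = (\<Sum>g\<in>carrier G. (\<Sum>r<e. \<tau> h $$ (p, r) * \<tau> (inv g) $$ (r, b)) * \<rho> g $$ (c, q))"
    using is_rep_mult[OF \<tau> h] index_mult_mat_sum[OF \<tau>h is_rep_carrier_mat[OF \<tau>] p b] by simp
  also have "\<dots> = (\<Sum>r<e. \<tau> h $$ (p, r) * ?X $$ (r, q))"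
    unfolding sum_mult_sum_swap_right[symmetric] using q by (simp add: averaged_unit_mat_def)
  also have "\<dots> = (\<tau> h * ?X) $$ (p, q)"
    by (rule index_mult_mat_sum[OF \<tau>h X p q, symmetric])
  finally show "(?X * \<rho> h) $$ (p, q) = (\<tau> h * ?X) $$ (p, q)" .
qed (use is_rep_carrier_mat[OF \<rho> h] is_rep_carrier_mat[OF \<tau> h] in \<open>auto simp: averaged_unit_mat_def\<close>)

lemma schur_orthogonality_inequivalent:
  assumes irr\<rho>: "irreducible_rep G d \<rho>" and irr\<tau>: "irreducible_rep G e \<tau>"
    and ne: "\<not> equiv_rep G d \<rho> e \<tau>"
    and p: "p < e" and b: "b < e" and c: "c < d" and q: "q < d"
  shows "(\<Sum>g\<in>carrier G. \<tau> (inv g) $$ (p, b) * \<rho> g $$ (c, q)) = 0"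
proof -
  have zero: "averaged_unit_mat \<tau> \<rho> e d b c = 0\<^sub>m e d"
    by (rule schur_lemma_inequivalent[OF irr\<rho> irr\<tau> averaged_unit_mat_carrier _ ne])
       (use averaged_unit_mat_intertwines irreducible_rep_is_rep[OF irr\<rho>] irreducible_rep_is_rep[OF irr\<tau>] b c
        in auto)
  show ?thesis
    using arg_cong[OF zero, of "\<lambda>M. M $$ (p, q)"] p q by (simp add: averaged_unit_mat_def)
qed

lemma schur_orthogonality:
  assumes irr: "irreducible_rep G d \<rho>"
    and p: "p < d" and b: "b < d" and c: "c < d" and q: "q < d"
  shows "(\<Sum>g\<in>carrier G. \<rho> (inv g) $$ (p, b) * \<rho> g $$ (c, q)) =
     (if p = q \<and> b = c then of_nat (card (carrier G)) / of_nat d else 0)"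
proof -
  have \<rho>: "is_rep G d \<rho>" and d: "0 < d" using irr irreducible_rep_is_rep irreducible_rep_dim_pos by auto
  let ?X = "averaged_unit_mat \<rho> \<rho> d d b c"
  obtain \<kappa> where \<kappa>: "?X = \<kappa> \<cdot>\<^sub>m 1\<^sub>m d"
    using schur_lemma_scalar[OF irr averaged_unit_mat_carrier, of \<rho> \<rho> b c]
      averaged_unit_mat_intertwines[OF \<rho> \<rho> b c] by auto
  \<comment> \<open>the scalar is determined by the trace of ?X\<close>
  have "(\<Sum>p<d. ?X $$ (p, p)) = (\<Sum>g\<in>carrier G. \<Sum>p<d. \<rho> g $$ (c, p) * \<rho> (inv g) $$ (p, b))"
    by (subst sum.swap) (auto simp: averaged_unit_mat_def mult.commute)
  also have "\<dots> = (\<Sum>g\<in>carrier G. (\<rho> g * \<rho> (inv g)) $$ (c, b))"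
    by (intro sum.cong refl index_mult_mat_sum[symmetric]) (use is_rep_carrier_mat[OF \<rho>] b c in auto)
  also have "\<dots> = (if c = b then of_nat (card (carrier G)) else 0)"
    using is_rep_mult_inv[OF \<rho>] b c by simp
  finally have "\<kappa> = (if c = b then of_nat (card (carrier G)) / of_nat d else 0)"
    using \<kappa> d by (auto simp: field_simps split: if_splits)
  moreover have "(\<Sum>g\<in>carrier G. \<rho> (inv g) $$ (p, b) * \<rho> g $$ (c, q)) = ?X $$ (p, q)"
    using p q by (simp add: averaged_unit_mat_def)
  ultimately show ?thesis using \<kappa> p q by auto
qed

end

locale irrep_system = finite_group G for G (structure) +
  fixes reps :: "(nat \<times> ('a \<Rightarrow> complex mat)) list"
  assumes complete: "complete_irreps G reps"
begin

abbreviation gorder :: nat where "gorder \<equiv> card (carrier G)"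

definition elems :: "'a list" where "elems = enum_carrier G"
definition elem_index :: "'a \<Rightarrow> nat" where "elem_index g = (SOME x. x < gorder \<and> elems ! x = g)"
definition irr_dim :: "nat \<Rightarrow> nat" where "irr_dim i = fst (reps ! i)"
definition irr :: "nat \<Rightarrow> 'a \<Rightarrow> complex mat" where "irr i = snd (reps ! i)"

lemma elems: "distinct elems" "set elems = carrier G" "length elems = gorder"
proof -
  have "\<exists>xs. distinct xs \<and> set xs = carrier G" using finite_distinct_list[OF finite_carrier] by auto
  then have "distinct elems \<and> set elems = carrier G" unfolding elems_def enum_carrier_def by (rule someI_ex)
  then show "distinct elems" "set elems = carrier G" "length elems = gorder"
    using distinct_card[of elems] by auto
qed

lemma gorder_pos: "0 < gorder"
  using finite_carrier one_closed card_gt_0_iff by blast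

lemma elems_nth_closed: "x < gorder \<Longrightarrow> elems ! x \<in> carrier G"
  using elems nth_mem by metis

lemma elem_index: assumes "g \<in> carrier G" shows "elem_index g < gorder" "elems ! elem_index g = g"
proof -
  have "\<exists>x. x < gorder \<and> elems ! x = g" using assms elems by (metis in_set_conv_nth)
  then have "elem_index g < gorder \<and> elems ! elem_index g = g" unfolding elem_index_def by (rule someI_ex)
  then show "elem_index g < gorder" "elems ! elem_index g = g" by auto
qed

lemma elem_index_nth: "x < gorder \<Longrightarrow> elem_index (elems ! x) = x"
  using elem_index[OF elems_nth_closed] elems nth_eq_iff_index_eq by metis

lemma elems_nth_eq_iff: "x < gorder \<Longrightarrow> y < gorder \<Longrightarrow> elems ! x = elems ! y \<longleftrightarrow> x = y"
  using elems nth_eq_iff_index_eq by metis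

lemma sum_lessThan_gorder: "(\<Sum>x<gorder. H x) = (\<Sum>g\<in>carrier G. H (elem_index g))"
  by (rule sum.reindex_bij_witness[of _ elem_index "\<lambda>x. elems ! x"])
     (auto simp: elem_index elem_index_nth elems_nth_closed)

lemma sum_elems: "(\<Sum>x<gorder. F (elems ! x)) = (\<Sum>g\<in>carrier G. F g)"
  using sum_lessThan_gorder[of "\<lambda>x. F (elems ! x)"] by (simp add: elem_index)

lemma sum_delta_elem_index:
  fixes H :: "nat \<Rightarrow> complex"
  assumes "h \<in> carrier G"
  shows "(\<Sum>y<gorder. (if elems ! y = h then 1 else 0) * H y) = H (elem_index h)"
proof -
  have "(\<Sum>y<gorder. (if elems ! y = h then 1 else 0) * H y) = (\<Sum>g\<in>carrier G. if g = h then H (elem_index g) else 0)"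
    by (auto simp: sum_lessThan_gorder elem_index intro!: sum.cong)
  then show ?thesis using assms finite_carrier by simp
qed

lemma irreducible_irr: "i < length reps \<Longrightarrow> irreducible_rep G (irr_dim i) (irr i)"
  using complete unfolding complete_irreps_def irr_dim_def irr_def by auto

lemma is_rep_irr: "i < length reps \<Longrightarrow> is_rep G (irr_dim i) (irr i)"
  using irreducible_irr irreducible_rep_is_rep by auto

lemma irr_dim_pos: "i < length reps \<Longrightarrow> 0 < irr_dim i"
  using irreducible_irr irreducible_rep_dim_pos by auto

lemma irr_inequivalent:
  "i < length reps \<Longrightarrow> j < length reps \<Longrightarrow> i \<noteq> j \<Longrightarrow> \<not> equiv_rep G (irr_dim i) (irr i) (irr_dim j) (irr j)"
  using complete unfolding complete_irreps_def irr_dim_def irr_def by auto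

lemma irreducible_equiv_irr:
  "irreducible_rep G d \<rho> \<Longrightarrow> \<exists>i<length reps. equiv_rep G d \<rho> (irr_dim i) (irr i)"
  using complete unfolding complete_irreps_def irr_dim_def irr_def by auto

lemma rep_index_iff: "(i, a, b) \<in> rep_index reps \<longleftrightarrow> i < length reps \<and> a < irr_dim i \<and> b < irr_dim i"
  unfolding rep_index_def irr_dim_def by auto

lemma finite_rep_index: "finite (rep_index reps)"
  by (rule finite_subset[of _ "SIGMA i:{..<length reps}. {..<irr_dim i} \<times> {..<irr_dim i}"])
     (auto simp: rep_index_iff)


definition coeff_mat :: "(nat \<times> nat \<times> nat) list \<Rightarrow> complex mat" where
  "coeff_mat ks = mat gorder (length ks) (\<lambda>(x, k). case ks ! k of (i, a, b) \<Rightarrow> irr i (elems ! x) $$ (a, b))"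

definition coeff_mat_dual :: "(nat \<times> nat \<times> nat) list \<Rightarrow> complex mat" where
  "coeff_mat_dual ks = mat (length ks) gorder (\<lambda>(k, x). case ks ! k of (i, a, b) \<Rightarrow>
      of_nat (irr_dim i) / of_nat gorder * irr i (inv (elems ! x)) $$ (b, a))"

lemma coeff_mat_carrier [simp]: "coeff_mat ks \<in> carrier_mat gorder (length ks)"
  unfolding coeff_mat_def by simp

lemma coeff_mat_dual_carrier [simp]: "coeff_mat_dual ks \<in> carrier_mat (length ks) gorder"
  unfolding coeff_mat_dual_def by simp

lemma coeff_mat_dims [simp]:
  "dim_row (coeff_mat ks) = gorder" "dim_col (coeff_mat ks) = length ks"
  "dim_row (coeff_mat_dual ks) = length ks" "dim_col (coeff_mat_dual ks) = gorder"
  unfolding coeff_mat_def coeff_mat_dual_def by simp_all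

lemma coeff_mat_dual_mult_coeff_mat:
  assumes ks: "distinct ks" "set ks = rep_index reps"
  shows "coeff_mat_dual ks * coeff_mat ks = 1\<^sub>m (length ks)"
proof (rule eq_matI)
  fix k l assume "k < dim_row (1\<^sub>m (length ks) :: complex mat)" "l < dim_col (1\<^sub>m (length ks) :: complex mat)"
  then have k: "k < length ks" and l: "l < length ks" by auto
  obtain i a b where kk: "ks ! k = (i, a, b)" by (cases "ks ! k") auto
  obtain j c q where ll: "ks ! l = (j, c, q)" by (cases "ks ! l") auto
  have i: "i < length reps" "a < irr_dim i" "b < irr_dim i"
    using kk k ks nth_mem rep_index_iff by metis+
  have j: "j < length reps" "c < irr_dim j" "q < irr_dim j"
    using ll l ks nth_mem rep_index_iff by metis+
  have "(coeff_mat_dual ks * coeff_mat ks) $$ (k, l) =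
      of_nat (irr_dim i) / of_nat gorder * (\<Sum>g\<in>carrier G. irr i (inv g) $$ (b, a) * irr j g $$ (c, q))"
    using index_mult_mat_sum[OF coeff_mat_dual_carrier coeff_mat_carrier k l] k l kk ll
    by (simp add: coeff_mat_def coeff_mat_dual_def sum_distrib_left mult.assoc flip: sum_elems)
  also have "\<dots> = 1\<^sub>m (length ks) $$ (k, l)"
  proof (cases "i = j")
    case True
    have "k = l \<longleftrightarrow> b = q \<and> a = c"
      using kk ll True nth_eq_iff_index_eq[OF ks(1) k l] by auto
    then show ?thesis
      using schur_orthogonality[OF irreducible_irr[OF i(1)], of b a c q] i j True k l irr_dim_pos[OF i(1)] gorder_pos
      by auto
  next
    case False
    then have "k \<noteq> l" using kk ll by auto
    then show ?thesis
      using schur_orthogonality_inequivalent[OF irreducible_irr[OF j(1)] irreducible_irr[OF i(1)]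
          irr_inequivalent[OF j(1) i(1)]] i j False k l by auto
  qed
  finally show "(coeff_mat_dual ks * coeff_mat ks) $$ (k, l) = 1\<^sub>m (length ks) $$ (k, l)" .
qed auto


lemma invariant_subspace_contains_irr:
  assumes rep: "is_rep G k \<pi>" and inv: "invariant_subspace G k \<pi> U" and ne: "U \<noteq> {0\<^sub>v k}"
  shows "\<exists>i B. i < length reps \<and> B \<in> carrier_mat k (irr_dim i) \<and> inj_mat B (irr_dim i) \<and>
    (\<forall>c\<in>carrier_vec (irr_dim i). B *\<^sub>v c \<in> U) \<and> (\<forall>g\<in>carrier G. \<pi> g * B = B * irr i g)"
proof -
  obtain m B \<pi>' where B: "0 < m" "B \<in> carrier_mat k m" "inj_mat B m" "\<forall>c\<in>carrier_vec m. B *\<^sub>v c \<in> U"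
    and \<pi>': "is_rep G m \<pi>'" "\<forall>g\<in>carrier G. \<pi> g * B = B * \<pi>' g"
    using invariant_subspace_subrep[OF rep inv ne] by blast
  obtain d \<rho> B2 where \<rho>: "irreducible_rep G d \<rho>" and B2: "B2 \<in> carrier_mat m d" "inj_mat B2 d"
    and B2\<rho>: "\<forall>g\<in>carrier G. \<pi>' g * B2 = B2 * \<rho> g"
    using irreducible_subrep_exists[OF \<pi>'(1) B(1)] by blast
  obtain i where i: "i < length reps" "equiv_rep G d \<rho> (irr_dim i) (irr i)"
    using irreducible_equiv_irr[OF \<rho>] by blast
  then obtain Q where d: "d = irr_dim i" and Q: "Q \<in> carrier_mat d d" "inj_mat Q d"
    and Q\<rho>: "\<forall>g\<in>carrier G. \<rho> g * Q = Q * irr i g"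
    using equiv_rep_intertwiner[OF _ irreducible_rep_is_rep[OF \<rho>] is_rep_irr] by metis
  define C where "C = B * (B2 * Q)"
  have C: "C \<in> carrier_mat k d" unfolding C_def using B B2 Q by auto
  have "inj_mat C d" unfolding C_def using B B2 Q by (intro inj_mat_mult) auto
  moreover have "\<pi> g * C = C * irr i g" if g: "g \<in> carrier G" for g
    unfolding C_def
    by (rule mult_intertwining_mat[OF is_rep_carrier_mat[OF rep g] is_rep_carrier_mat[OF \<pi>'(1) g] _ B(2)])
       (use B2 Q g is_rep_carrier_mat[OF is_rep_irr[OF i(1)] g] d \<pi>'(2)
          mult_intertwining_mat[OF is_rep_carrier_mat[OF \<pi>'(1) g]
            is_rep_carrier_mat[OF irreducible_rep_is_rep[OF \<rho>] g] _ B2(1) Q(1)] B2\<rho> Q\<rho> in auto)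
  moreover have "C *\<^sub>v c \<in> U" if "c \<in> carrier_vec d" for c
    unfolding C_def using B B2 Q that by (simp add: assoc_mult_mat_vec[of B k m "B2 * Q" d])
  ultimately show ?thesis using i(1) C d by blast
qed


definition reg_rep :: "'a \<Rightarrow> complex mat" where
  "reg_rep g = mat gorder gorder (\<lambda>(x, y). if elems ! y = elems ! x \<otimes> g then 1 else 0)"

lemma reg_rep_carrier [simp]: "reg_rep g \<in> carrier_mat gorder gorder"
  unfolding reg_rep_def by simp

lemma reg_rep_mult_mat_index:
  assumes B: "B \<in> carrier_mat gorder m" and g: "g \<in> carrier G" and x: "x < gorder" and q: "q < m"
  shows "(reg_rep g * B) $$ (x, q) = B $$ (elem_index (elems ! x \<otimes> g), q)"
proof -
  have "(reg_rep g * B) $$ (x, q) = (\<Sum>y<gorder. (if elems ! y = elems ! x \<otimes> g then 1 else 0) * B $$ (y, q))"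
    using index_mult_mat_sum[OF reg_rep_carrier B x q] x by (simp add: reg_rep_def)
  also have "\<dots> = B $$ (elem_index (elems ! x \<otimes> g), q)"
    by (rule sum_delta_elem_index) (use g x elems_nth_closed in auto)
  finally show ?thesis .
qed

lemma reg_rep_mult_vec_index:
  assumes f: "f \<in> carrier_vec gorder" and g: "g \<in> carrier G" and x: "x < gorder"
  shows "(reg_rep g *\<^sub>v f) $ x = f $ elem_index (elems ! x \<otimes> g)"
proof -
  have "(reg_rep g *\<^sub>v f) $ x = (\<Sum>y<gorder. (if elems ! y = elems ! x \<otimes> g then 1 else 0) * f $ y)"
    using index_mult_mat_vec_sum[OF reg_rep_carrier f x] x by (simp add: reg_rep_def)
  also have "\<dots> = f $ elem_index (elems ! x \<otimes> g)"
    by (rule sum_delta_elem_index) (use g x elems_nth_closed in auto)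
  finally show ?thesis .
qed

lemma is_rep_reg_rep: "is_rep G gorder reg_rep"
  unfolding is_rep_def
proof (intro conjI ballI)
  fix g h assume g: "g \<in> carrier G" and h: "h \<in> carrier G"
  show "reg_rep (g \<otimes> h) = reg_rep g * reg_rep h"
  proof (rule eq_matI)
    fix x y assume "x < dim_row (reg_rep g * reg_rep h)" "y < dim_col (reg_rep g * reg_rep h)"
    then have x: "x < gorder" and y: "y < gorder" by (auto simp: reg_rep_def)
    have "(reg_rep g * reg_rep h) $$ (x, y) = (if elems ! y = elems ! x \<otimes> g \<otimes> h then 1 else 0)"
      using reg_rep_mult_mat_index[OF reg_rep_carrier g x y] elem_index[of "elems ! x \<otimes> g"]
        elems_nth_closed[OF x] g y
      by (simp add: reg_rep_def)
    then show "reg_rep (g \<otimes> h) $$ (x, y) = (reg_rep g * reg_rep h) $$ (x, y)"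
      using x y elems_nth_closed[OF x] g h by (simp add: reg_rep_def m_assoc)
  qed (auto simp: reg_rep_def)
qed (auto simp: reg_rep_def elems_nth_closed elems_nth_eq_iff intro!: eq_matI)

definition coeff_pairing :: "complex vec \<Rightarrow> nat \<Rightarrow> nat \<Rightarrow> nat \<Rightarrow> complex" where
  "coeff_pairing f i a b = (\<Sum>x<gorder. irr i (inv (elems ! x)) $$ (b, a) * f $ x)"

lemma coeff_pairing_reg_rep:
  assumes f: "f \<in> carrier_vec gorder" and g: "g \<in> carrier G"
    and i: "i < length reps" and a: "a < irr_dim i" and b: "b < irr_dim i"
  shows "coeff_pairing (reg_rep g *\<^sub>v f) i a b = (\<Sum>r<irr_dim i. irr i g $$ (b, r) * coeff_pairing f i a r)"
proof -
  let ?\<rho> = "irr i"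
  have \<rho>: "is_rep G (irr_dim i) ?\<rho>" using is_rep_irr[OF i] .
  have "coeff_pairing (reg_rep g *\<^sub>v f) i a b = (\<Sum>w\<in>carrier G. ?\<rho> (inv w) $$ (b, a) * f $ elem_index (w \<otimes> g))"
    unfolding coeff_pairing_def sum_elems[symmetric]
    by (rule sum.cong) (use reg_rep_mult_vec_index[OF f g] in auto)
  also have "\<dots> = (\<Sum>w\<in>carrier G. ?\<rho> (inv (w \<otimes> inv g)) $$ (b, a) * f $ elem_index w)"
    by (subst sum_carrier_mult_right[OF g, symmetric]) (use g in \<open>auto intro!: sum.cong simp: m_assoc\<close>)
  also have "\<dots> = (\<Sum>w\<in>carrier G. (\<Sum>r<irr_dim i. ?\<rho> g $$ (b, r) * ?\<rho> (inv w) $$ (r, a)) * f $ elem_index w)"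
  proof (rule sum.cong[OF refl])
    fix w assume w: "w \<in> carrier G"
    have "?\<rho> (inv (w \<otimes> inv g)) = ?\<rho> g * ?\<rho> (inv w)"
      using w g is_rep_mult[OF \<rho> g] by (simp add: inv_mult_group)
    then show "?\<rho> (inv (w \<otimes> inv g)) $$ (b, a) * f $ elem_index w =
      (\<Sum>r<irr_dim i. ?\<rho> g $$ (b, r) * ?\<rho> (inv w) $$ (r, a)) * f $ elem_index w"
      using index_mult_mat_sum[OF is_rep_carrier_mat[OF \<rho> g] is_rep_carrier_mat[OF \<rho>] b a] w by simp
  qed
  also have "\<dots> = (\<Sum>r<irr_dim i. ?\<rho> g $$ (b, r) * (\<Sum>w\<in>carrier G. ?\<rho> (inv w) $$ (r, a) * f $ elem_index w))"
    by (rule sum_mult_sum_swap_right[symmetric])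
  also have "\<dots> = (\<Sum>r<irr_dim i. ?\<rho> g $$ (b, r) * coeff_pairing f i a r)"
    unfolding coeff_pairing_def sum_lessThan_gorder by (simp add: elem_index)
  finally show ?thesis .
qed

definition coeff_annihilator :: "complex vec set" where
  "coeff_annihilator = {f \<in> carrier_vec gorder.
     \<forall>i<length reps. \<forall>a<irr_dim i. \<forall>b<irr_dim i. coeff_pairing f i a b = 0}"

lemma coeff_annihilator_invariant: "invariant_subspace G gorder reg_rep coeff_annihilator"
  unfolding invariant_subspace_def
proof (intro conjI ballI allI)
  fix v w assume "v \<in> coeff_annihilator" "w \<in> coeff_annihilator"
  moreover have "coeff_pairing (v + w) i a b = coeff_pairing v i a b + coeff_pairing w i a b"
    if "v \<in> carrier_vec gorder" "w \<in> carrier_vec gorder" for i a b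
    using that unfolding coeff_pairing_def by (auto simp: sum.distrib algebra_simps)
  ultimately show "v + w \<in> coeff_annihilator" unfolding coeff_annihilator_def by auto
next
  fix c v assume "v \<in> coeff_annihilator"
  moreover have "coeff_pairing (c \<cdot>\<^sub>v v) i a b = c * coeff_pairing v i a b"
    if "v \<in> carrier_vec gorder" for i a b
    using that unfolding coeff_pairing_def by (auto simp: sum_distrib_left algebra_simps)
  ultimately show "c \<cdot>\<^sub>v v \<in> coeff_annihilator" unfolding coeff_annihilator_def by auto
next
  fix g v assume g: "g \<in> carrier G" and v: "v \<in> coeff_annihilator"
  then show "reg_rep g *\<^sub>v v \<in> coeff_annihilator"
    using coeff_pairing_reg_rep[OF _ g] mult_mat_vec_carrier[OF reg_rep_carrier]
    unfolding coeff_annihilator_def by auto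
qed (auto simp: coeff_annihilator_def coeff_pairing_def)


lemma reg_rep_intertwiner_entry:
  assumes B: "B \<in> carrier_mat gorder (irr_dim i)" and i: "i < length reps"
    and inter: "\<forall>g\<in>carrier G. reg_rep g * B = B * irr i g" and y: "y < gorder" and q: "q < irr_dim i"
  shows "B $$ (y, q) = (\<Sum>r<irr_dim i. B $$ (elem_index \<one>, r) * irr i (elems ! y) $$ (r, q))"
proof -
  have g: "elems ! y \<in> carrier G" using elems_nth_closed[OF y] .
  have one: "elem_index \<one> < gorder" "elems ! elem_index \<one> = \<one>" using elem_index by auto
  have "B $$ (y, q) = (reg_rep (elems ! y) * B) $$ (elem_index \<one>, q)"
    using reg_rep_mult_mat_index[OF B g one(1) q] one g elem_index_nth[OF y] by simp
  also have "\<dots> = (B * irr i (elems ! y)) $$ (elem_index \<one>, q)" using inter g by simp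
  also have "\<dots> = (\<Sum>r<irr_dim i. B $$ (elem_index \<one>, r) * irr i (elems ! y) $$ (r, q))"
    by (rule index_mult_mat_sum[OF B is_rep_carrier_mat[OF is_rep_irr[OF i] g] one(1) q])
  finally show ?thesis .
qed

lemma coeff_pairing_coeff_combination:
  assumes i: "i < length reps" and a: "a < irr_dim i" and q: "q < irr_dim i"
    and f: "f \<in> carrier_vec gorder" "\<And>y. y < gorder \<Longrightarrow> f $ y = (\<Sum>r<irr_dim i. c r * irr i (elems ! y) $$ (r, q))"
  shows "coeff_pairing f i a q = c a * (of_nat gorder / of_nat (irr_dim i))"
proof -
  have "coeff_pairing f i a q =
      (\<Sum>x<gorder. irr i (inv (elems ! x)) $$ (q, a) * (\<Sum>r<irr_dim i. c r * irr i (elems ! x) $$ (r, q)))"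
    unfolding coeff_pairing_def using f(2) by (intro sum.cong) auto
  also have "\<dots> = (\<Sum>r<irr_dim i. c r * (\<Sum>x<gorder. irr i (inv (elems ! x)) $$ (q, a) * irr i (elems ! x) $$ (r, q)))"
    by (simp add: sum_distrib_left sum_distrib_right algebra_simps sum.swap[of _ "{..<gorder}"])
  also have "\<dots> = (\<Sum>r<irr_dim i. c r * (\<Sum>g\<in>carrier G. irr i (inv g) $$ (q, a) * irr i g $$ (r, q)))"
  proof (rule sum.cong[OF refl])
    fix r show "c r * (\<Sum>x<gorder. irr i (inv (elems ! x)) $$ (q, a) * irr i (elems ! x) $$ (r, q)) =
        c r * (\<Sum>g\<in>carrier G. irr i (inv g) $$ (q, a) * irr i g $$ (r, q))"
      using sum_elems[of "\<lambda>g. irr i (inv g) $$ (q, a) * irr i g $$ (r, q)"] by simp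
  qed
  also have "\<dots> = (\<Sum>r<irr_dim i. if r = a then c a * (of_nat gorder / of_nat (irr_dim i)) else 0)"
    using schur_orthogonality[OF irreducible_irr[OF i], of q a _ q] a q by (intro sum.cong) auto
  finally show ?thesis using a by simp
qed

lemma coeff_annihilator_trivial: "coeff_annihilator = {0\<^sub>v gorder}"
proof (rule ccontr)
  assume "coeff_annihilator \<noteq> {0\<^sub>v gorder}"
  then obtain i B where i: "i < length reps" and B: "B \<in> carrier_mat gorder (irr_dim i)" "inj_mat B (irr_dim i)"
    and BW: "\<forall>c\<in>carrier_vec (irr_dim i). B *\<^sub>v c \<in> coeff_annihilator"
    and inter: "\<forall>g\<in>carrier G. reg_rep g * B = B * irr i g"
    using invariant_subspace_contains_irr[OF is_rep_reg_rep coeff_annihilator_invariant] by blast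
  have d: "0 < irr_dim i" using irr_dim_pos[OF i] .
  note entry = reg_rep_intertwiner_entry[OF B(1) i inter]
  \<comment> \<open>the first column of B is a combination of coefficient functions of irr i, yet annihilates them all\<close>
  have c0: "B $$ (elem_index \<one>, a) = 0" if a: "a < irr_dim i" for a
  proof -
    have "col B 0 \<in> coeff_annihilator" using BW col_eq_mult_mat_vec_unit_vec[OF B(1) d] by simp
    then have "coeff_pairing (col B 0) i a 0 = 0" using i a d unfolding coeff_annihilator_def by auto
    moreover have "coeff_pairing (col B 0) i a 0 = B $$ (elem_index \<one>, a) * (of_nat gorder / of_nat (irr_dim i))"
      by (rule coeff_pairing_coeff_combination[OF i a d]) (use B d entry[OF _ d] in \<open>auto simp: carrier_vecI\<close>)
    ultimately show ?thesis using gorder_pos d by simp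
  qed
  have "B *\<^sub>v unit_vec (irr_dim i) 0 = 0\<^sub>v gorder"
    by (rule eq_vecI) (use B d entry[OF _ d] c0 in \<open>auto simp: index_mult_mat_vec_unit_vec\<close>)
  then show False using B d unfolding inj_mat_def by (metis unit_vec_carrier unit_vec_nonzero carrier_matD(1))
qed

lemma coeff_mat_inverse:
  assumes ks: "distinct ks" "set ks = rep_index reps"
  shows "length ks = gorder" "coeff_mat ks * coeff_mat_dual ks = 1\<^sub>m gorder"
proof -
  have dual: "coeff_mat_dual ks * coeff_mat ks = 1\<^sub>m (length ks)"
    by (rule coeff_mat_dual_mult_coeff_mat[OF ks])
  have "inj_mat (coeff_mat_dual ks) gorder" unfolding inj_mat_def
  proof (intro ballI impI)
    fix v assume v: "v \<in> carrier_vec gorder" and z: "coeff_mat_dual ks *\<^sub>v v = 0\<^sub>v (dim_row (coeff_mat_dual ks))"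
    have "v \<in> coeff_annihilator" unfolding coeff_annihilator_def
    proof (intro CollectI conjI v allI impI)
      fix i a b assume i: "i < length reps" and a: "a < irr_dim i" and b: "b < irr_dim i"
      then obtain k where k: "k < length ks" "ks ! k = (i, a, b)"
        using ks rep_index_iff by (metis in_set_conv_nth)
      have "(coeff_mat_dual ks *\<^sub>v v) $ k = of_nat (irr_dim i) / of_nat gorder * coeff_pairing v i a b"
        using index_mult_mat_vec_sum[OF coeff_mat_dual_carrier v k(1)] k
        by (simp add: coeff_mat_dual_def coeff_pairing_def sum_distrib_left mult.assoc)
      then show "coeff_pairing v i a b = 0" using z k irr_dim_pos[OF i] gorder_pos by simp
    qed
    then show "v = 0\<^sub>v gorder" using coeff_annihilator_trivial by simp
  qed
  then have "gorder \<le> length ks" by (rule inj_mat_dim_le[OF coeff_mat_dual_carrier])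
  moreover have "length ks \<le> gorder"
    using inj_mat_dim_le[OF coeff_mat_carrier inj_mat_of_right_inverse[OF coeff_mat_carrier coeff_mat_dual_carrier dual]] .
  ultimately show len: "length ks = gorder" by simp
  have "coeff_mat_dual ks \<in> carrier_mat gorder gorder" "coeff_mat ks \<in> carrier_mat gorder gorder"
    using coeff_mat_dual_carrier[of ks] coeff_mat_carrier[of ks] unfolding len .
  then show "coeff_mat ks * coeff_mat_dual ks = 1\<^sub>m gorder"
    using mat_mult_left_right_inverse dual unfolding len by blast
qed


definition cayley_mat :: "'a set \<Rightarrow> complex mat" where
  "cayley_mat S = mat gorder gorder (\<lambda>(x, y). if inv (elems ! x) \<otimes> elems ! y \<in> S then 1 else 0)"

definition perm_mat :: "('a \<Rightarrow> 'a) \<Rightarrow> complex mat" where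
  "perm_mat \<tau> = mat gorder gorder (\<lambda>(x, z). if elems ! z = \<tau> (elems ! x) then 1 else 0)"

definition coeff_lambda :: "'a set \<Rightarrow> nat \<times> nat \<times> nat \<Rightarrow> complex" where
  "coeff_lambda S t = rep_lambda S (irr_dim (fst t)) (irr (fst t))"

lemma cayley_mat_carrier [simp]: "cayley_mat S \<in> carrier_mat gorder gorder"
  unfolding cayley_mat_def by simp

lemma perm_mat_carrier [simp]: "perm_mat \<tau> \<in> carrier_mat gorder gorder"
  unfolding perm_mat_def by simp

lemma cayley_mat_mult_coeff_mat:
  assumes S: "S \<subseteq> carrier G" and conj: "\<forall>g\<in>carrier G. \<forall>s\<in>S. g \<otimes> s \<otimes> inv g \<in> S"
    and ks: "distinct ks" "set ks = rep_index reps"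
  shows "cayley_mat S * coeff_mat ks = coeff_mat ks * mat_diag (length ks) (\<lambda>k. coeff_lambda S (ks ! k))"
proof (rule eq_matI)
  fix x k assume "x < dim_row (coeff_mat ks * mat_diag (length ks) (\<lambda>k. coeff_lambda S (ks ! k)))"
    "k < dim_col (coeff_mat ks * mat_diag (length ks) (\<lambda>k. coeff_lambda S (ks ! k)))"
  then have x: "x < gorder" and k: "k < length ks"
    using mat_diag_dim[of "length ks" "\<lambda>k. coeff_lambda S (ks ! k)"] by auto
  obtain i a b where kk: "ks ! k = (i, a, b)" by (cases "ks ! k") auto
  then have i: "i < length reps" and a: "a < irr_dim i" and b: "b < irr_dim i"
    using k ks nth_mem rep_index_iff by metis+
  have X: "elems ! x \<in> carrier G" using elems_nth_closed[OF x] .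
  have \<rho>: "is_rep G (irr_dim i) (irr i)" by (rule is_rep_irr[OF i])
  have "(cayley_mat S * coeff_mat ks) $$ (x, k) =
      (\<Sum>y<gorder. (if inv (elems ! x) \<otimes> elems ! y \<in> S then 1 else 0) * irr i (elems ! y) $$ (a, b))"
    using index_mult_mat_sum[OF cayley_mat_carrier coeff_mat_carrier x k] x k kk
    by (simp add: cayley_mat_def coeff_mat_def)
  also have "\<dots> = (\<Sum>g\<in>carrier G. if inv (elems ! x) \<otimes> g \<in> S then irr i g $$ (a, b) else 0)"
    unfolding sum_elems[of "\<lambda>g. if inv (elems ! x) \<otimes> g \<in> S then irr i g $$ (a, b) else 0", symmetric]
    by (intro sum.cong) auto
  also have "\<dots> = (\<Sum>s\<in>S. irr i (elems ! x \<otimes> s) $$ (a, b))"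
    using finite_carrier X S
    by (simp add: sum.inter_filter[symmetric])
       (rule sum.reindex_bij_witness[of _ "\<lambda>s. elems ! x \<otimes> s" "\<lambda>w. inv (elems ! x) \<otimes> w"],
        auto simp: inv_mult_cancel_left mult_inv_cancel_left)
  also have "\<dots> = (\<Sum>r<irr_dim i. irr i (elems ! x) $$ (a, r) * (\<Sum>s\<in>S. irr i s $$ (r, b)))"
    using is_rep_mult[OF \<rho> X] S index_mult_mat_sum[OF is_rep_carrier_mat[OF \<rho> X] is_rep_carrier_mat[OF \<rho>] a b]
    by (simp add: sum_distrib_left subset_iff cong: sum.cong) (rule sum.swap)
  also have "\<dots> = (\<Sum>r<irr_dim i. if r = b then irr i (elems ! x) $$ (a, b) * coeff_lambda S (ks ! k) else 0)"
    using sum_irreducible_conj_closed[OF S conj irreducible_irr[OF i] _ b] kk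
    by (intro sum.cong) (auto simp: coeff_lambda_def)
  also have "\<dots> = irr i (elems ! x) $$ (a, b) * coeff_lambda S (ks ! k)" using b by simp
  also have "\<dots> = (coeff_mat ks * mat_diag (length ks) (\<lambda>k. coeff_lambda S (ks ! k))) $$ (x, k)"
    unfolding mat_diag_mult_right[OF coeff_mat_carrier] using x k kk by (simp add: coeff_mat_def)
  finally show "(cayley_mat S * coeff_mat ks) $$ (x, k) =
      (coeff_mat ks * mat_diag (length ks) (\<lambda>k. coeff_lambda S (ks ! k))) $$ (x, k)" .
qed (auto simp: cayley_mat_def mat_diag_def)

lemma perm_mat_mult_index:
  assumes \<tau>: "\<forall>x\<in>carrier G. \<tau> x \<in> carrier G"
    and B: "B \<in> carrier_mat gorder m" and x: "x < gorder" and q: "q < m"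
  shows "(perm_mat \<tau> * B) $$ (x, q) = B $$ (elem_index (\<tau> (elems ! x)), q)"
proof -
  have "(perm_mat \<tau> * B) $$ (x, q) = (\<Sum>y<gorder. (if elems ! y = \<tau> (elems ! x) then 1 else 0) * B $$ (y, q))"
    using index_mult_mat_sum[OF perm_mat_carrier B x q] x by (simp add: perm_mat_def)
  also have "\<dots> = B $$ (elem_index (\<tau> (elems ! x)), q)"
    by (rule sum_delta_elem_index) (use \<tau> elems_nth_closed x in auto)
  finally show ?thesis .
qed

lemma perm_mat_involution:
  assumes \<tau>: "\<forall>x\<in>carrier G. \<tau> x \<in> carrier G" and inv\<tau>: "\<forall>x\<in>carrier G. \<tau> (\<tau> x) = x"
  shows "perm_mat \<tau> * perm_mat \<tau> = 1\<^sub>m gorder"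
proof (rule eq_matI)
  fix x y assume "x < dim_row (1\<^sub>m gorder :: complex mat)" "y < dim_col (1\<^sub>m gorder :: complex mat)"
  then have x: "x < gorder" and y: "y < gorder" by auto
  have "\<tau> (elems ! x) \<in> carrier G" using \<tau> elems_nth_closed[OF x] by auto
  then show "(perm_mat \<tau> * perm_mat \<tau>) $$ (x, y) = 1\<^sub>m gorder $$ (x, y)"
    using perm_mat_mult_index[OF \<tau> perm_mat_carrier x y] elem_index inv\<tau> elems_nth_closed[OF x] x y
    by (auto simp: perm_mat_def elems_nth_eq_iff)
qed (auto simp: perm_mat_def)

lemma perm_mat_cayley_mat_commute:
  assumes \<tau>: "\<forall>x\<in>carrier G. \<tau> x \<in> carrier G" and inv\<tau>: "\<forall>x\<in>carrier G. \<tau> (\<tau> x) = x"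
    and S\<tau>: "\<forall>x\<in>carrier G. \<forall>y\<in>carrier G. inv x \<otimes> \<tau> y \<in> S \<longleftrightarrow> inv (\<tau> x) \<otimes> y \<in> S"
  shows "perm_mat \<tau> * cayley_mat S = cayley_mat S * perm_mat \<tau>"
proof (rule eq_matI)
  fix x y assume "x < dim_row (cayley_mat S * perm_mat \<tau>)" "y < dim_col (cayley_mat S * perm_mat \<tau>)"
  then have x: "x < gorder" and y: "y < gorder" by (auto simp: cayley_mat_def perm_mat_def)
  have X: "elems ! x \<in> carrier G" and Y: "elems ! y \<in> carrier G" using elems_nth_closed x y by auto
  have \<tau>X: "\<tau> (elems ! x) \<in> carrier G" and \<tau>Y: "\<tau> (elems ! y) \<in> carrier G" using \<tau> X Y by auto
  have "(perm_mat \<tau> * cayley_mat S) $$ (x, y) = (if inv (elems ! x) \<otimes> \<tau> (elems ! y) \<in> S then 1 else 0)"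
    using perm_mat_mult_index[OF \<tau> cayley_mat_carrier x y] elem_index[OF \<tau>X] y S\<tau> X Y
    by (simp add: cayley_mat_def)
  also have "\<dots> = (\<Sum>z<gorder. (if elems ! z = \<tau> (elems ! y) then 1 else 0) *
      (if inv (elems ! x) \<otimes> elems ! z \<in> S then 1 else 0))"
    using sum_delta_elem_index[OF \<tau>Y, of "\<lambda>z. if inv (elems ! x) \<otimes> elems ! z \<in> S then 1 else 0"]
    by (simp add: elem_index[OF \<tau>Y])
  also have "\<dots> = (cayley_mat S * perm_mat \<tau>) $$ (x, y)"
    unfolding index_mult_mat_sum[OF cayley_mat_carrier perm_mat_carrier x y]
    using x y elems_nth_closed inv\<tau> Y by (intro sum.cong) (auto simp: cayley_mat_def perm_mat_def)
  finally show "(perm_mat \<tau> * cayley_mat S) $$ (x, y) = (cayley_mat S * perm_mat \<tau>) $$ (x, y)" .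
qed (auto simp: cayley_mat_def perm_mat_def)

lemma mat_trace_perm_mat: "mat_trace (perm_mat \<tau>) = of_nat (card {g \<in> carrier G. g = \<tau> g})"
proof -
  have "mat_trace (perm_mat \<tau>) = (\<Sum>g\<in>carrier G. if g = \<tau> g then 1 else 0)"
    unfolding mat_trace_def sum_elems[symmetric] by (auto simp: perm_mat_def intro!: sum.cong)
  then show ?thesis using finite_carrier by (simp add: sum.If_cases Int_def)
qed


lemma spectrum_up_to_signs_listI:
  assumes ks: "distinct ks" "set ks = rep_index reps"
    and es: "length es = length ks" "set es \<subseteq> {1, -1}"
  shows "spectrum_up_to_signs S reps (mset (map2 (\<lambda>e t. e * coeff_lambda S t) es ks)) (count (mset es) 1)"
  unfolding spectrum_up_to_signs_def
proof (intro exI conjI)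
  define \<epsilon> where "\<epsilon> t = the (map_of (zip ks es) t)" for t
  have \<epsilon>: "map \<epsilon> ks = es" using es(1) ks(1) by (intro nth_equalityI) (simp_all add: \<epsilon>_def map_of_zip_nth)
  show "\<forall>t\<in>rep_index reps. \<epsilon> t = 1 \<or> \<epsilon> t = -1"
    using es(2) unfolding \<epsilon>[symmetric] ks(2)[symmetric] by (auto simp: image_subset_iff)
  have "image_mset (\<lambda>(i, a, b). \<epsilon> (i, a, b) * rep_lambda S (fst (reps ! i)) (snd (reps ! i))) (mset_set (rep_index reps))
      = mset (map (\<lambda>t. \<epsilon> t * coeff_lambda S t) ks)"
    using ks by (auto simp: mset_set_set[symmetric] coeff_lambda_def irr_dim_def irr_def intro!: image_mset_cong)
  also have "\<dots> = mset (map2 (\<lambda>e t. e * coeff_lambda S t) es ks)"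
    unfolding \<epsilon>[symmetric] by (intro arg_cong[where f = mset] nth_equalityI) auto
  finally show "mset (map2 (\<lambda>e t. e * coeff_lambda S t) es ks) =
      image_mset (\<lambda>(i, a, b). \<epsilon> (i, a, b) * rep_lambda S (fst (reps ! i)) (snd (reps ! i))) (mset_set (rep_index reps))" ..
  have "card {t \<in> rep_index reps. \<epsilon> t = 1} = length (filter (\<lambda>t. \<epsilon> t = 1) ks)"
    using ks distinct_card[of "filter (\<lambda>t. \<epsilon> t = 1) ks"] by simp
  also have "\<dots> = count (mset es) 1"
    unfolding \<epsilon>[symmetric] by (induction ks) auto
  finally show "card {t \<in> rep_index reps. \<epsilon> t = 1} = count (mset es) 1" .
qed

theorem spectrum_perm_mat_mult_cayley_mat:
  assumes S: "S \<subseteq> carrier G" and conj: "\<forall>g\<in>carrier G. \<forall>s\<in>S. g \<otimes> s \<otimes> inv g \<in> S"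
    and \<tau>: "\<forall>x\<in>carrier G. \<tau> x \<in> carrier G" and inv\<tau>: "\<forall>x\<in>carrier G. \<tau> (\<tau> x) = x"
    and S\<tau>: "\<forall>x\<in>carrier G. \<forall>y\<in>carrier G. inv x \<otimes> \<tau> y \<in> S \<longleftrightarrow> inv (\<tau> x) \<otimes> y \<in> S"
  shows "\<exists>c. spectrum_up_to_signs S reps (eigenvalue_mset (perm_mat \<tau> * cayley_mat S)) c \<and>
            2 * c = gorder + card {g \<in> carrier G. g = \<tau> g}"
proof -
  \<comment> \<open>enumerate the matrix coefficients so that equal eigenvalues of the Cayley matrix are consecutive\<close>
  obtain ks and key :: "nat \<times> nat \<times> nat \<Rightarrow> nat" and g where ks: "distinct ks" "set ks = rep_index reps" and srt: "sorted (map key ks)"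
    and g: "\<And>t. t \<in> rep_index reps \<Longrightarrow> g (key t) = coeff_lambda S t"
    and same_key: "\<And>s t. coeff_lambda S s = coeff_lambda S t \<Longrightarrow> key s = key t"
    using grouped_enumeration[OF finite_rep_index, of "coeff_lambda S"] by blast
  have len: "length ks = gorder" using coeff_mat_inverse[OF ks] by simp
  have gk: "g (map key ks ! k) = coeff_lambda S (ks ! k)" if k: "k < gorder" for k
  proof -
    have "ks ! k \<in> rep_index reps" using nth_mem[of k ks] ks(2) len k by simp
    then show ?thesis using g k len by simp
  qed
  define M where "M = coeff_mat ks"
  define M' where "M' = coeff_mat_dual ks"
  define D where "D = mat_diag gorder (\<lambda>k. coeff_lambda S (ks ! k))"
  define T' where "T' = M' * perm_mat \<tau> * M"
  have D_key: "D = mat_diag gorder (\<lambda>k. g (map key ks ! k))" unfolding D_def mat_diag_def using gk by auto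
  have mats: "{M, M', perm_mat \<tau>, cayley_mat S, D} \<subseteq> carrier_mat gorder gorder"
    using len by (auto simp: M_def M'_def D_def)
  have M'M: "M' * M = 1\<^sub>m gorder" using coeff_mat_dual_mult_coeff_mat[OF ks] len by (simp add: M_def M'_def)
  have MM': "M * M' = 1\<^sub>m gorder" using coeff_mat_inverse[OF ks] by (simp add: M_def M'_def)
  have RM: "cayley_mat S * M = M * D"
    using cayley_mat_mult_coeff_mat[OF S conj ks] len by (simp add: M_def D_def)
  note sim = involution_commuting_similar[OF mats M'M MM' perm_mat_involution[OF \<tau> inv\<tau>]
      perm_mat_cayley_mat_commute[OF \<tau> inv\<tau> S\<tau>] RM, folded T'_def]
  have T': "T' \<in> carrier_mat gorder gorder" using mats unfolding T'_def by auto
  have blocks: "\<forall>i<gorder. \<forall>j<gorder. map key ks ! i \<noteq> map key ks ! j \<longrightarrow> T' $$ (i, j) = 0"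
  proof (intro allI impI)
    fix i j assume ij: "i < gorder" "j < gorder" "map key ks ! i \<noteq> map key ks ! j"
    then have "key (ks ! i) \<noteq> key (ks ! j)" using len by simp
    then have "coeff_lambda S (ks ! i) \<noteq> coeff_lambda S (ks ! j)" using same_key by blast
    then show "T' $$ (i, j) = 0" using mat_diag_commute_entry[OF T' sim(3)[unfolded D_def]] ij by auto
  qed
  obtain es where es: "length es = gorder" "set es \<subseteq> {1, -1}"
    "char_poly (T' * D) = (\<Prod>a\<in>#mset (map2 (\<lambda>e k. e * g k) es (map key ks)). [:- a, 1:])"
    "2 * of_nat (count (mset es) 1) = of_nat gorder + mat_trace T'"
    using char_poly_involution_mult_mat_diag[OF T' sim(2) _ srt blocks, of g] len unfolding D_key by auto
  have "map2 (\<lambda>e k. e * g k) es (map key ks) = map2 (\<lambda>e t. e * coeff_lambda S t) es ks"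
    by (intro nth_equalityI) (use es(1) len gk in auto)
  then have eig: "eigenvalue_mset (perm_mat \<tau> * cayley_mat S) = mset (map2 (\<lambda>e t. e * coeff_lambda S t) es ks)"
    using char_poly_similar[OF sim(1)] es(3) by (intro eigenvalue_mset_eqI) simp
  have "mat_trace T' = mat_trace (perm_mat \<tau>)"
    unfolding T'_def using mats MM' by (intro mat_trace_conj) auto
  then have "(of_nat (2 * count (mset es) 1) :: complex) = of_nat (gorder + card {g \<in> carrier G. g = \<tau> g})"
    using es(4) mat_trace_perm_mat by simp
  then have "2 * count (mset es) 1 = gorder + card {g \<in> carrier G. g = \<tau> g}" by (rule of_nat_eq_iff[THEN iffD1])
  then show ?thesis using spectrum_up_to_signs_listI[OF ks, of es S] es len eig by auto
qed


lemma adj_matrix_eq_perm_mat_mult_cayley_mat: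
  assumes \<tau>: "\<forall>x\<in>carrier G. \<tau> x \<in> carrier G"
    and count: "\<And>x y. x \<in> carrier G \<Longrightarrow> y \<in> carrier G \<Longrightarrow>
      card {s \<in> S. e x s = y} = (if inv (\<tau> x) \<otimes> y \<in> S then 1 else 0)"
  shows "adj_matrix G S e = perm_mat \<tau> * cayley_mat S"
proof -
  have adj: "adj_matrix G S e = mat gorder gorder (\<lambda>(i, j). of_nat (card {s \<in> S. e (elems ! i) s = elems ! j}))"
    unfolding adj_matrix_def Let_def elems_def[symmetric] using elems by simp
  show ?thesis
  proof (rule eq_matI)
    fix x y assume "x < dim_row (perm_mat \<tau> * cayley_mat S)" "y < dim_col (perm_mat \<tau> * cayley_mat S)"
    then have x: "x < gorder" and y: "y < gorder" by (auto simp: perm_mat_def cayley_mat_def)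
    have X: "elems ! x \<in> carrier G" and "elems ! y \<in> carrier G" using elems_nth_closed x y by auto
    then have "adj_matrix G S e $$ (x, y) = (if inv (\<tau> (elems ! x)) \<otimes> elems ! y \<in> S then 1 else 0)"
      unfolding adj using x y count by simp
    also have "\<dots> = (perm_mat \<tau> * cayley_mat S) $$ (x, y)"
      using perm_mat_mult_index[OF \<tau> cayley_mat_carrier x y] elem_index[of "\<tau> (elems ! x)"] \<tau> X y
      by (simp add: cayley_mat_def)
    finally show "adj_matrix G S e $$ (x, y) = (perm_mat \<tau> * cayley_mat S) $$ (x, y)" .
  qed (auto simp: adj perm_mat_def cayley_mat_def)
qed

lemma spectrum_adj_matrix:
  assumes S: "S \<subseteq> carrier G" and conj: "\<forall>g\<in>carrier G. \<forall>s\<in>S. g \<otimes> s \<otimes> inv g \<in> S"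
    and \<tau>: "\<forall>x\<in>carrier G. \<tau> x \<in> carrier G" and inv\<tau>: "\<forall>x\<in>carrier G. \<tau> (\<tau> x) = x"
    and S\<tau>: "\<forall>x\<in>carrier G. \<forall>y\<in>carrier G. inv x \<otimes> \<tau> y \<in> S \<longleftrightarrow> inv (\<tau> x) \<otimes> y \<in> S"
    and count: "\<And>x y. x \<in> carrier G \<Longrightarrow> y \<in> carrier G \<Longrightarrow>
      card {s \<in> S. e x s = y} = (if inv (\<tau> x) \<otimes> y \<in> S then 1 else 0)"
  shows "\<exists>c. spectrum_up_to_signs S reps (eigenvalue_mset (adj_matrix G S e)) c \<and>
            2 * c = gorder + card {g \<in> carrier G. g = \<tau> g}"
  using spectrum_perm_mat_mult_cayley_mat[OF S conj \<tau> inv\<tau> S\<tau>]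
    adj_matrix_eq_perm_mat_mult_cayley_mat[OF \<tau> count] by simp

lemma spectrum_cayley_sum_graph:
  assumes S: "S \<subseteq> carrier G" and sym: "\<forall>s\<in>S. inv s \<in> S"
    and conj: "\<forall>g\<in>carrier G. \<forall>s\<in>S. g \<otimes> s \<otimes> inv g \<in> S"
  shows "\<exists>c. spectrum_up_to_signs S reps (eigenvalue_mset (adj_matrix G S (cayley_sum_edge G))) c \<and>
            2 * c = gorder + card {g \<in> carrier G. g = inv g}"
proof (rule spectrum_adj_matrix[OF S conj])
  have S_inv: "inv x \<in> S \<longleftrightarrow> x \<in> S" if "x \<in> carrier G" for x using sym that by (metis inv_inv)
  show "\<forall>x\<in>carrier G. \<forall>y\<in>carrier G. inv x \<otimes> inv y \<in> S \<longleftrightarrow> inv (inv x) \<otimes> y \<in> S"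
    using S_inv conj_closed_mult_swap[OF conj] by (simp add: inv_mult_group[symmetric])
  show "card {s \<in> S. cayley_sum_edge G x s = y} = (if inv (inv x) \<otimes> y \<in> S then 1 else 0)"
    if "x \<in> carrier G" "y \<in> carrier G" for x y
  proof (rule card_unique_solution[where w = "x \<otimes> y"])
    fix s assume "s \<in> S"
    then show "cayley_sum_edge G x s = y \<longleftrightarrow> s = x \<otimes> y"
      using that S unfolding cayley_sum_edge_def by (simp add: inv_solve_left' subset_iff)
  qed (use that in simp)
qed auto

lemma spectrum_twisted_cayley_graph:
  assumes S: "S \<subseteq> carrier G" and conj: "\<forall>g\<in>carrier G. \<forall>s\<in>S. g \<otimes> s \<otimes> inv g \<in> S"
    and hom: "\<sigma> \<in> hom G G" and inv\<sigma>: "\<forall>g\<in>carrier G. \<sigma> (\<sigma> g) = g" and S\<sigma>: "\<sigma> ` S = S"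
  shows "\<exists>c. spectrum_up_to_signs S reps (eigenvalue_mset (adj_matrix G S (twisted_cayley_edge G \<sigma>))) c \<and>
            2 * c = gorder + card {g \<in> carrier G. g = \<sigma> g}"
proof -
  interpret \<sigma>: group_hom G G \<sigma> using hom by (simp add: group_hom_def group_hom_axioms_def is_group)
  have S\<sigma>_iff: "\<sigma> x \<in> S \<longleftrightarrow> x \<in> S" if "x \<in> carrier G" for x
    by (rule involution_image_eq_iff[OF S\<sigma> inv\<sigma> that])
  have key: "\<sigma> (inv x \<otimes> \<sigma> y) = inv (\<sigma> x) \<otimes> y" if "x \<in> carrier G" "y \<in> carrier G" for x y
    using that inv\<sigma> by simp
  show ?thesis
  proof (rule spectrum_adj_matrix[OF S conj])
    show "\<forall>x\<in>carrier G. \<forall>y\<in>carrier G. inv x \<otimes> \<sigma> y \<in> S \<longleftrightarrow> inv (\<sigma> x) \<otimes> y \<in> S"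
      using S\<sigma>_iff key by (metis inv_closed m_closed \<sigma>.hom_closed)
    show "card {s \<in> S. twisted_cayley_edge G \<sigma> x s = y} = (if inv (\<sigma> x) \<otimes> y \<in> S then 1 else 0)"
      if "x \<in> carrier G" "y \<in> carrier G" for x y
    proof (rule card_unique_solution[where w = "inv x \<otimes> \<sigma> y"])
      fix s assume "s \<in> S"
      then show "twisted_cayley_edge G \<sigma> x s = y \<longleftrightarrow> s = inv x \<otimes> \<sigma> y"
        using that S inv\<sigma> unfolding twisted_cayley_edge_def by (metis inv_solve_left m_closed \<sigma>.hom_closed subsetD)
    qed (use that S\<sigma>_iff key in \<open>metis inv_closed m_closed \<sigma>.hom_closed\<close>)
  qed (use inv\<sigma> in auto)
qed

lemma spectrum_twisted_cayley_sum_graph: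
  assumes S: "S \<subseteq> carrier G" and sym: "\<forall>s\<in>S. inv s \<in> S"
    and conj: "\<forall>g\<in>carrier G. \<forall>s\<in>S. g \<otimes> s \<otimes> inv g \<in> S"
    and hom: "\<sigma> \<in> hom G G" and inv\<sigma>: "\<forall>g\<in>carrier G. \<sigma> (\<sigma> g) = g" and S\<sigma>: "\<sigma> ` S = S"
  shows "\<exists>c. spectrum_up_to_signs S reps (eigenvalue_mset (adj_matrix G S (twisted_cayley_sum_edge G \<sigma>))) c \<and>
            2 * c = gorder + card {g \<in> carrier G. g = inv (\<sigma> g)}"
proof -
  interpret \<sigma>: group_hom G G \<sigma> using hom by (simp add: group_hom_def group_hom_axioms_def is_group)
  have S\<sigma>_iff: "\<sigma> x \<in> S \<longleftrightarrow> x \<in> S" if "x \<in> carrier G" for x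
    by (rule involution_image_eq_iff[OF S\<sigma> inv\<sigma> that])
  have S_inv: "inv x \<in> S \<longleftrightarrow> x \<in> S" if "x \<in> carrier G" for x using sym that by (metis inv_inv)
  show ?thesis
  proof (rule spectrum_adj_matrix[OF S conj])
    show "\<forall>x\<in>carrier G. \<forall>y\<in>carrier G. inv x \<otimes> inv (\<sigma> y) \<in> S \<longleftrightarrow> inv (inv (\<sigma> x)) \<otimes> y \<in> S"
    proof (intro ballI)
      fix x y assume x: "x \<in> carrier G" and y: "y \<in> carrier G"
      have "inv x \<otimes> inv (\<sigma> y) \<in> S \<longleftrightarrow> \<sigma> y \<otimes> x \<in> S" using S_inv x y by (simp add: inv_mult_group[symmetric])
      also have "\<dots> \<longleftrightarrow> y \<otimes> \<sigma> x \<in> S" using S\<sigma>_iff[of "\<sigma> y \<otimes> x"] x y inv\<sigma> by simp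
      also have "\<dots> \<longleftrightarrow> inv (inv (\<sigma> x)) \<otimes> y \<in> S" using conj_closed_mult_swap[OF conj] x y by simp
      finally show "inv x \<otimes> inv (\<sigma> y) \<in> S \<longleftrightarrow> inv (inv (\<sigma> x)) \<otimes> y \<in> S" .
    qed
    show "card {s \<in> S. twisted_cayley_sum_edge G \<sigma> x s = y} = (if inv (inv (\<sigma> x)) \<otimes> y \<in> S then 1 else 0)"
      if x: "x \<in> carrier G" and y: "y \<in> carrier G" for x y
    proof (rule card_unique_solution[where w = "x \<otimes> \<sigma> y"])
      fix s assume "s \<in> S"
      then show "twisted_cayley_sum_edge G \<sigma> x s = y \<longleftrightarrow> s = x \<otimes> \<sigma> y"
        using x y S inv\<sigma> unfolding twisted_cayley_sum_edge_def
        by (metis inv_closed inv_inv inv_solve_left m_closed \<sigma>.hom_closed subsetD)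
    qed (use x y S\<sigma>_iff[of "x \<otimes> \<sigma> y"] inv\<sigma> in simp)
  qed (use inv\<sigma> in auto)
qed

end

theorem theorem3p1:
  fixes G :: "('a, 'b) monoid_scheme" and \<sigma> :: "'a \<Rightarrow> 'a" and S :: "'a set"
    and reps :: "(nat \<times> ('a \<Rightarrow> complex mat)) list"
  assumes grp: "group G"
    and fin: "finite (carrier G)"
    and card4: "card (carrier G) \<ge> 4"
    and aut: "\<sigma> \<in> iso G G"
    and ord2: "\<forall>g\<in>carrier G. \<sigma> (\<sigma> g) = g" "\<exists>g\<in>carrier G. \<sigma> g \<noteq> g"
    and S_sub: "S \<subseteq> carrier G"
    and S_sym: "\<forall>s\<in>S. inv\<^bsub>G\<^esub> s \<in> S"
    and S_conj: "\<forall>g\<in>carrier G. \<forall>s\<in>S. g \<otimes>\<^bsub>G\<^esub> s \<otimes>\<^bsub>G\<^esub> inv\<^bsub>G\<^esub> g \<in> S"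
    and irr: "complete_irreps G reps"
  shows
    "(\<exists>c. spectrum_up_to_signs S reps (eigenvalue_mset (adj_matrix G S (cayley_sum_edge G))) c \<and>
          2 * c = card (carrier G) + card {g\<in>carrier G. g = inv\<^bsub>G\<^esub> g})
   \<and> (\<sigma> ` S = S \<longrightarrow>
        (\<exists>c. spectrum_up_to_signs S reps (eigenvalue_mset (adj_matrix G S (twisted_cayley_edge G \<sigma>))) c \<and>
          2 * c = card (carrier G) + card {g\<in>carrier G. g = \<sigma> g}))
   \<and> (\<sigma> ` S = S \<longrightarrow>
        (\<exists>c. spectrum_up_to_signs S reps (eigenvalue_mset (adj_matrix G S (twisted_cayley_sum_edge G \<sigma>))) c \<and>
          2 * c = card (carrier G) + card {g\<in>carrier G. g = inv\<^bsub>G\<^esub> (\<sigma> g)}))"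
proof -
  interpret irrep_system G reps
    using grp fin irr by (simp add: irrep_system_def finite_group_def finite_group_axioms_def irrep_system_axioms_def)
  have hom: "\<sigma> \<in> hom G G" using aut by (simp add: iso_def)
  show ?thesis
    using spectrum_cayley_sum_graph[OF S_sub S_sym S_conj]
      spectrum_twisted_cayley_graph[OF S_sub S_conj hom ord2(1)]
      spectrum_twisted_cayley_sum_graph[OF S_sub S_sym S_conj hom ord2(1)] by blast
qed

end
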